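(* Let $\varepsilon>0$ be a constant and $d=d(n)$. If $\mathbb{F}$ is finite, then the fraction of $n^d\times n^d$ matrices over $\mathbb{F}$ with $\mathrm{PT\text{-}rank}\le(\tfrac12-\varepsilon)n^d$ tends to $0$ as $n\to\infty$. If $\mathbb{F}$ is infinite, then for all sufficiently large $n$ the set of $n^d\times n^d$ matrices with $\mathrm{PT\text{-}rank}\le(\tfrac12-\varepsilon)n^d$ has Zariski closure of dimension strictly less than $n^{2d}$. (That is, asymptotically almost all $n^d\times n^d$ matrices have PT-rank at least $(\tfrac12-\varepsilon)n^d$.)
   Context: Rows and columns of $n^d\times n^d$ matrices are indexed by $[n]^d$. For $k\in[d]$, $M^{\top_k}_{(i_1,\dots,i_d),(j_1,\dots,j_d)}=M_{(\dots,i_{k-1},j_k,i_{k+1},\dots),(\dots,j_{k-1},i_k,j_{k+1},\dots)}$; $M^{\top_\kappa}$ is the composition over $k\in\kappa\subseteq[d]$. $M$ is PT-basic if $\mathrm{rank}(M^{\top_\kappa})=1$ for some $\kappa$; $\mathrm{PT\text{-}rank}(M)$ is the least number of PT-basic matrices summing to $M$. *)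

theory Defs
  imports Complex_Main "HOL-Library.Function_Algebras" "HOL-Library.Poly_Mapping" "HOL-Library.Extended_Nat"
begin

text \<open>Multi-indices in [n]^d are lists of length d with entries < n (0-based).
  An n^d x n^d matrix is a function idx => idx => 'a that vanishes outside
  idx_set n d x idx_set n d.\<close>

definition idx_set :: "nat \<Rightarrow> nat \<Rightarrow> nat list set" where
  "idx_set n d = {i. length i = d \<and> (\<forall>k<d. i ! k < n)}"

definition mats :: "nat \<Rightarrow> nat \<Rightarrow> (nat list \<Rightarrow> nat list \<Rightarrow> 'a::zero) set" where
  "mats n d = {M. \<forall>i j. (i \<notin> idx_set n d \<or> j \<notin> idx_set n d) \<longrightarrow> M i j = 0}"

definition mix :: "nat set \<Rightarrow> nat list \<Rightarrow> nat list \<Rightarrow> nat list" where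
  "mix K a b = map (\<lambda>k. if k \<in> K then a ! k else b ! k) [0..<length b]"

text \<open>Partial transpose over the set K of tensor factors (0-based factors).\<close>
definition ptrans :: "nat \<Rightarrow> nat \<Rightarrow> nat set \<Rightarrow> (nat list \<Rightarrow> nat list \<Rightarrow> 'a::zero)
    \<Rightarrow> (nat list \<Rightarrow> nat list \<Rightarrow> 'a)" where
  "ptrans n d K M = (\<lambda>i j. if i \<in> idx_set n d \<and> j \<in> idx_set n d
       then M (mix K j i) (mix K i j) else 0)"

text \<open>Rank: dimension of the column space, inside the vector space of functions
  nat list => 'a with pointwise scalar multiplication.\<close>
definition fscale :: "'a::field \<Rightarrow> ('b \<Rightarrow> 'a) \<Rightarrow> ('b \<Rightarrow> 'a)" where
  "fscale c f = (\<lambda>x. c * f x)"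

definition mrank :: "nat \<Rightarrow> nat \<Rightarrow> (nat list \<Rightarrow> nat list \<Rightarrow> 'a::field) \<Rightarrow> nat" where
  "mrank n d M = vector_space.dim fscale ((\<lambda>j. (\<lambda>i. M i j)) ` idx_set n d)"

definition pt_basic :: "nat \<Rightarrow> nat \<Rightarrow> (nat list \<Rightarrow> nat list \<Rightarrow> 'a::field) \<Rightarrow> bool" where
  "pt_basic n d M \<longleftrightarrow> M \<in> mats n d \<and>
     (\<exists>K \<subseteq> {0..<d}. mrank n d (ptrans n d K M) = 1)"

definition pt_rank :: "nat \<Rightarrow> nat \<Rightarrow> (nat list \<Rightarrow> nat list \<Rightarrow> 'a::field) \<Rightarrow> nat" where
  "pt_rank n d M = (LEAST r. \<exists>Ms. length Ms = r \<and> (\<forall>A \<in> set Ms. pt_basic n d A)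
                                 \<and> M = sum_list Ms)"

text \<open>Polynomials in the matrix entries x_(i,j): finitely supported maps from
  monomials (finitely supported exponent vectors) to coefficients.\<close>
type_synonym 'a mpoly = "((nat list \<times> nat list) \<Rightarrow>\<^sub>0 nat) \<Rightarrow>\<^sub>0 'a"

definition mpeval :: "'a::comm_ring_1 mpoly \<Rightarrow> (nat list \<Rightarrow> nat list \<Rightarrow> 'a) \<Rightarrow> 'a" where
  "mpeval p M = (\<Sum>m \<in> Poly_Mapping.keys p. Poly_Mapping.lookup p m *
       (\<Prod>v \<in> Poly_Mapping.keys (m :: (nat list \<times> nat list) \<Rightarrow>\<^sub>0 nat).
           M (fst v) (snd v) ^ Poly_Mapping.lookup m v))"

definition zvanish :: "nat \<Rightarrow> nat \<Rightarrow> 'a::comm_ring_1 mpoly set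
    \<Rightarrow> (nat list \<Rightarrow> nat list \<Rightarrow> 'a) set" where
  "zvanish n d P = {M \<in> mats n d. \<forall>p\<in>P. mpeval p M = 0}"

definition zclosed :: "nat \<Rightarrow> nat \<Rightarrow> (nat list \<Rightarrow> nat list \<Rightarrow> 'a::comm_ring_1) set \<Rightarrow> bool" where
  "zclosed n d Z \<longleftrightarrow> (\<exists>P. Z = zvanish n d P)"

definition zclosure :: "nat \<Rightarrow> nat \<Rightarrow> (nat list \<Rightarrow> nat list \<Rightarrow> 'a::comm_ring_1) set
    \<Rightarrow> (nat list \<Rightarrow> nat list \<Rightarrow> 'a) set" where
  "zclosure n d S = \<Inter>{Z. zclosed n d Z \<and> S \<subseteq> Z}"

definition zirreducible :: "nat \<Rightarrow> nat \<Rightarrow> (nat list \<Rightarrow> nat list \<Rightarrow> 'a::comm_ring_1) set \<Rightarrow> bool" where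
  "zirreducible n d Z \<longleftrightarrow> zclosed n d Z \<and> Z \<noteq> {} \<and>
     (\<forall>Z1 Z2. zclosed n d Z1 \<and> zclosed n d Z2 \<and> Z = Z1 \<union> Z2 \<longrightarrow> Z = Z1 \<or> Z = Z2)"

definition zdim :: "nat \<Rightarrow> nat \<Rightarrow> (nat list \<Rightarrow> nat list \<Rightarrow> 'a::comm_ring_1) set \<Rightarrow> enat" where
  "zdim n d X = Sup {enat k | k. \<exists>Z :: nat \<Rightarrow> (nat list \<Rightarrow> nat list \<Rightarrow> 'a) set.
      (\<forall>t\<le>k. zirreducible n d (Z t) \<and> Z t \<subseteq> X) \<and> (\<forall>t<k. Z t \<subset> Z (Suc t))}"

end

theory Submission
  imports Defs "HOL-Library.FuncSet" "HOL-Library.Cardinality"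
begin

(* A matrix of PT-rank at most R is a sum of R partial transposes of outer products u v^T, so
   with N = n^d it is the value, at one of 2^(dR) choices of transposition patterns, of a map
   that is bilinear in 2R vectors of length N.

   Over a finite field with q elements this leaves at most 2^(dR) q^(2NR) such matrices among
   q^(N^2), and for R <= (1/2 - eps) N the exponent dR + 2NR falls short of N^2 by at least
   eps N^2 (because d <= N/n).

   Over any field the same parametrisation bounds the Krull dimension of the Zariski closure by
   the number 2RN < N^2 of parameters.  This is a comparison of Hilbert functions: h_X(D) is the
   dimension of the space of functions on X given by polynomials of degree at most D in each
   entry.  Pulling back along the parametrisation bounds h_X(D), for X inside the closure, by a
   polynomial of degree 2RN in D.  Along a chain Z_0 < ... < Z_k of irreducible closed sets,
   multiplication by a polynomial of degree e vanishing on Z_j but not on Z_(j+1) is injective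
   on functions on Z_(j+1), by irreducibility, so
   h_(Z_(j+1))(D) >= h_(Z_j)(D) + h_(Z_(j+1))(D - e) and h_(Z_k)(E t) >= binomial(t + k, k).
   Hence k <= 2RN. *)

section \<open>Finite-dimensional subspaces of a function space\<close>

global_interpretation fs: vector_space "fscale :: 'a::field \<Rightarrow> ('b \<Rightarrow> 'a) \<Rightarrow> ('b \<Rightarrow> 'a)"
  by unfold_locales (auto simp: fscale_def fun_eq_iff algebra_simps)

lemma fscale_apply: "fscale c f x = c * f x"
  by (simp add: fscale_def)

lemma sum_apply: "(\<Sum>j\<in>J. f j) x = (\<Sum>j\<in>J. f j x)"
  by (induction J rule: infinite_finite_induct) simp_all

lemma module_hom_fscaleI:
  assumes "\<And>x y. f (x + y) = f x + f y" "\<And>c x. f (fscale c x) = fscale c (f x)"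
  shows "module_hom (fscale :: 'a::field \<Rightarrow> ('b \<Rightarrow> 'a) \<Rightarrow> _) (fscale :: 'a \<Rightarrow> ('c \<Rightarrow> 'a) \<Rightarrow> _) f"
  using assms by (auto simp: module_hom_iff intro: fs.module_axioms)

lemma fs_basis_obtain:
  assumes "S \<subseteq> fs.span T" "finite T"
  obtains B where "B \<subseteq> S" "fs.independent B" "S \<subseteq> fs.span B" "card B = fs.dim S" "finite B"
  using fs.basis_exists[of S] fs.independent_span_bound[OF assms(2)] assms(1)
  by (metis order_trans)

lemma fs_card_independent_le_dim:
  assumes "fs.independent B" "B \<subseteq> fs.span S" "S \<subseteq> fs.span T" "finite T"
  shows "card B \<le> fs.dim S"
proof -
  obtain C where C: "C \<subseteq> S" "fs.independent C" "S \<subseteq> fs.span C" "card C = fs.dim S" "finite C"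
    by (rule fs_basis_obtain[OF assms(3,4)])
  have "B \<subseteq> fs.span C"
    using assms(2) C(3) by (metis fs.span_mono fs.span_span order_trans)
  then show ?thesis using fs.independent_span_bound[OF C(5) assms(1)] C(4) by simp
qed

lemma fs_dim_le_if_subset_span:
  assumes "A \<subseteq> fs.span B" "B \<subseteq> fs.span T" "finite T"
  shows "fs.dim A \<le> fs.dim B"
proof -
  have "A \<subseteq> fs.span T" using assms by (metis fs.span_mono fs.span_span order_trans)
  then obtain C where C: "C \<subseteq> A" "fs.independent C" "A \<subseteq> fs.span C" "card C = fs.dim A" "finite C"
    using assms(3) by (rule fs_basis_obtain)
  have "C \<subseteq> fs.span B" using C(1) assms(1) by auto
  then show ?thesis using fs_card_independent_le_dim[OF C(2) _ assms(2,3)] C(4) by simp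
qed

lemma fs_dim_image_le:
  assumes f: "module_hom fscale fscale f" and S: "S \<subseteq> fs.span T" "finite T"
  shows "fs.dim (f ` S) \<le> fs.dim S"
proof -
  interpret f: module_hom fscale fscale f by fact
  obtain B where B: "B \<subseteq> S" "fs.independent B" "S \<subseteq> fs.span B" "card B = fs.dim S" "finite B"
    by (rule fs_basis_obtain[OF S])
  have "fs.dim (f ` S) \<le> card (f ` B)"
    by (rule fs.span_card_ge_dim) (use B f.spans_image in auto)
  also have "\<dots> \<le> fs.dim S"
    using card_image_le[OF B(5)] B(4) by simp
  finally show ?thesis .
qed

lemma fs_dim_image_eq:
  assumes f: "module_hom fscale fscale f" and inj: "inj_on f (fs.span S)"
  shows "fs.dim (f ` S) = fs.dim S"
proof -
  interpret f: module_hom fscale fscale f by fact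
  obtain B where B: "B \<subseteq> S" "fs.independent B" "S \<subseteq> fs.span B" "card B = fs.dim S"
    using fs.basis_exists[of S] by auto
  then have "fs.span S = fs.span B"
    using fs.span_mono[of B S] fs.span_mono[of S "fs.span B"] fs.span_span[of B] by auto
  moreover have "card (f ` B) = card B"
    using inj card_image[of f B] inj_on_subset[of f "fs.span S" B] B(1) fs.span_superset by auto
  ultimately show ?thesis
    by (metis B(2,4) inj f.dependent_inj_imageD f.span_image fs.dim_eq_card_independent fs.dim_span)
qed

lemma fs_dim_Un_le:
  assumes "U \<subseteq> fs.span T1" "W \<subseteq> fs.span T2" "finite T1" "finite T2"
  shows "fs.dim (U \<union> W) \<le> fs.dim U + fs.dim W"
proof -
  obtain BU where BU: "BU \<subseteq> U" "fs.independent BU" "U \<subseteq> fs.span BU" "card BU = fs.dim U" "finite BU"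
    by (rule fs_basis_obtain[OF assms(1,3)])
  obtain BW where BW: "BW \<subseteq> W" "fs.independent BW" "W \<subseteq> fs.span BW" "card BW = fs.dim W" "finite BW"
    by (rule fs_basis_obtain[OF assms(2,4)])
  have "U \<union> W \<subseteq> fs.span (BU \<union> BW)"
    using BU(3) BW(3) fs.span_mono[of BU "BU \<union> BW"] fs.span_mono[of BW "BU \<union> BW"] by blast
  then have "fs.dim (U \<union> W) \<le> card (BU \<union> BW)" using BU(5) BW(5) by (intro fs.dim_le_card) auto
  also have "\<dots> \<le> card BU + card BW" by (rule card_Un_le)
  finally show ?thesis using BU(4) BW(4) by simp
qed

lemma fs_independent_lift_Un:
  fixes \<rho> :: "('b \<Rightarrow> 'a::field) \<Rightarrow> ('c \<Rightarrow> 'a)"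
  assumes \<rho>: "module_hom fscale fscale \<rho>"
    and C: "fs.independent C" "finite C" and \<sigma>: "\<And>c. c \<in> C \<Longrightarrow> \<rho> (\<sigma> c) = c"
    and B: "fs.independent B" "finite B" and ker: "\<And>b. b \<in> B \<Longrightarrow> \<rho> b = 0"
  shows "fs.independent (\<sigma> ` C \<union> B)" and "card (\<sigma> ` C \<union> B) = card C + card B"
proof -
  interpret \<rho>: module_hom fscale fscale \<rho> by fact
  have inj\<sigma>: "inj_on \<sigma> C" by (metis \<sigma> inj_onI)
  have "0 \<notin> C" using C(1) fs.dependent_zero by blast
  then have disj: "\<sigma> ` C \<inter> B = {}"
    using \<sigma> ker by (auto simp: disjoint_iff) metis
  show "card (\<sigma> ` C \<union> B) = card C + card B"
    unfolding card_Un_disjoint[OF finite_imageI[OF C(2)] B(2) disj] card_image[OF inj\<sigma>] ..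
  show "fs.independent (\<sigma> ` C \<union> B)"
  proof (rule fs.independent_if_scalars_zero)
    fix f x assume sum0: "(\<Sum>x\<in>\<sigma> ` C \<union> B. fscale (f x) x) = 0" and x: "x \<in> \<sigma> ` C \<union> B"
    have split: "(\<Sum>x\<in>\<sigma> ` C \<union> B. fscale (f x) x)
        = (\<Sum>c\<in>C. fscale (f (\<sigma> c)) (\<sigma> c)) + (\<Sum>b\<in>B. fscale (f b) b)"
      using C(2) B(2) disj by (simp add: sum.union_disjoint sum.reindex[OF inj\<sigma>])
    have "\<rho> (\<Sum>x\<in>\<sigma> ` C \<union> B. fscale (f x) x)
        = (\<Sum>c\<in>C. fscale (f (\<sigma> c)) (\<rho> (\<sigma> c))) + (\<Sum>b\<in>B. fscale (f b) (\<rho> b))"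
      unfolding split \<rho>.add \<rho>.sum \<rho>.scale ..
    also have "\<dots> = (\<Sum>c\<in>C. fscale (f (\<sigma> c)) c)"
      using \<sigma> ker by simp
    finally have "(\<Sum>c\<in>C. fscale (f (\<sigma> c)) c) = 0"
      using sum0 by simp
    then have fC: "\<And>c. c \<in> C \<Longrightarrow> f (\<sigma> c) = 0"
      using fs.independentD[OF C order_refl, of "\<lambda>c. f (\<sigma> c)"] by blast
    then have "(\<Sum>b\<in>B. fscale (f b) b) = 0"
      using sum0 unfolding split by simp
    then have "\<And>b. b \<in> B \<Longrightarrow> f b = 0"
      using fs.independentD[OF B order_refl, of f] by blast
    then show "f x = 0" using x fC by auto
  qed (use C(2) B(2) in simp)
qed

lemma fs_dim_image_add_dim_kernel_le:
  fixes \<rho> :: "('b \<Rightarrow> 'a::field) \<Rightarrow> ('c \<Rightarrow> 'a)"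
  assumes \<rho>: "module_hom fscale fscale \<rho>" and G: "finite G"
    and W: "W \<subseteq> fs.span G" and ker: "\<And>w. w \<in> W \<Longrightarrow> \<rho> w = 0"
  shows "fs.dim (\<rho> ` fs.span G) + fs.dim W \<le> fs.dim (fs.span G)"
proof -
  interpret \<rho>: module_hom fscale fscale \<rho> by fact
  have "\<rho> ` fs.span G \<subseteq> fs.span (\<rho> ` G)" by (simp add: \<rho>.span_image)
  then obtain C where C: "C \<subseteq> \<rho> ` fs.span G" "fs.independent C" "\<rho> ` fs.span G \<subseteq> fs.span C"
      "card C = fs.dim (\<rho> ` fs.span G)" "finite C"
    by (rule fs_basis_obtain) (use G in auto)
  obtain B where B: "B \<subseteq> W" "fs.independent B" "W \<subseteq> fs.span B" "card B = fs.dim W" "finite B"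
    by (rule fs_basis_obtain[OF W G])
  have "\<forall>c\<in>C. \<exists>x\<in>fs.span G. \<rho> x = c" using C(1) by blast
  then obtain \<sigma> where \<sigma>: "\<And>c. c \<in> C \<Longrightarrow> \<sigma> c \<in> fs.span G \<and> \<rho> (\<sigma> c) = c"
    by metis
  have kerB: "\<And>b. b \<in> B \<Longrightarrow> \<rho> b = 0" using B(1) ker by blast
  note T = fs_independent_lift_Un[OF \<rho> C(2,5) _ B(2,5) kerB, of \<sigma>]
  have "\<sigma> ` C \<union> B \<subseteq> fs.span G" using \<sigma> W B(1) by auto
  then have "card (\<sigma> ` C \<union> B) \<le> fs.dim (fs.span G)"
    using fs_card_independent_le_dim[OF T(1) _ _ G, of "fs.span G"] \<sigma> by (simp add: fs.span_span)
  then show ?thesis using T(2) \<sigma> C(4) B(4) by simp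
qed

section \<open>Polynomial functions\<close>

definition monomials :: "('i \<Rightarrow> 'x \<Rightarrow> 'a::field) \<Rightarrow> 'i set \<Rightarrow> nat \<Rightarrow> ('x \<Rightarrow> 'a) set" where
  "monomials c I E = {(\<lambda>x. \<Prod>i\<in>I. c i x ^ a i) | a. \<forall>i\<in>I. a i \<le> E}"

definition polyfuns :: "('i \<Rightarrow> 'x \<Rightarrow> 'a::field) \<Rightarrow> 'i set \<Rightarrow> nat \<Rightarrow> ('x \<Rightarrow> 'a) set" where
  "polyfuns c I E = fs.span (monomials c I E)"

lemma monomialsI: "\<forall>i\<in>I. a i \<le> E \<Longrightarrow> (\<lambda>x. \<Prod>i\<in>I. c i x ^ a i) \<in> monomials c I E"
  unfolding monomials_def by blast

lemma monomials_eq_image: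
  "monomials c I E = (\<lambda>a. (\<lambda>x. \<Prod>i\<in>I. c i x ^ a i)) ` PiE I (\<lambda>_. {0..E})"
proof (intro equalityI subsetI)
  fix f assume "f \<in> monomials c I E"
  then obtain a where a: "\<forall>i\<in>I. a i \<le> E" "f = (\<lambda>x. \<Prod>i\<in>I. c i x ^ a i)"
    by (auto simp: monomials_def)
  have "restrict a I \<in> PiE I (\<lambda>_. {0..E})" using a by (auto simp: PiE_def Pi_def)
  moreover have "f = (\<lambda>x. \<Prod>i\<in>I. c i x ^ restrict a I i)" using a by auto
  ultimately show "f \<in> (\<lambda>a. (\<lambda>x. \<Prod>i\<in>I. c i x ^ a i)) ` PiE I (\<lambda>_. {0..E})" by blast
next
  fix f assume "f \<in> (\<lambda>a. (\<lambda>x. \<Prod>i\<in>I. c i x ^ a i)) ` PiE I (\<lambda>_. {0..E})"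
  then obtain a where "a \<in> PiE I (\<lambda>_. {0..E})" "f = (\<lambda>x. \<Prod>i\<in>I. c i x ^ a i)" by blast
  then show "f \<in> monomials c I E" by (auto intro!: monomialsI simp: PiE_def Pi_def)
qed

lemma finite_monomials: "finite I \<Longrightarrow> finite (monomials c I E)"
  unfolding monomials_eq_image by (auto intro!: finite_PiE)

lemma card_monomials_le:
  assumes I: "finite I" shows "card (monomials c I E) \<le> (E+1) ^ card I"
proof -
  have "card (monomials c I E) \<le> card (PiE I (\<lambda>_. {0..E::nat}))"
    unfolding monomials_eq_image by (rule card_image_le) (rule finite_PiE[OF I], simp)
  also have "\<dots> = (\<Prod>i\<in>I. card {0..E})" using I by (rule card_PiE)
  also have "\<dots> = (E+1) ^ card I" by simp
  finally show ?thesis .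
qed

lemma dim_polyfuns_le:
  assumes I: "finite I" shows "fs.dim (polyfuns c I E) \<le> (E+1) ^ card I"
proof -
  have "fs.dim (polyfuns c I E) = fs.dim (monomials c I E)" unfolding polyfuns_def by (rule fs.dim_span)
  also have "\<dots> \<le> card (monomials c I E)" by (rule fs.dim_le_card'[OF finite_monomials[OF I]])
  also have "\<dots> \<le> (E+1) ^ card I" by (rule card_monomials_le[OF I])
  finally show ?thesis .
qed

lemma monomials_mono: "E \<le> F \<Longrightarrow> monomials c I E \<subseteq> monomials c I F"
  unfolding monomials_def by (blast intro: order_trans)

lemma polyfuns_mono: "E \<le> F \<Longrightarrow> polyfuns c I E \<subseteq> polyfuns c I F"
  unfolding polyfuns_def by (intro fs.span_mono monomials_mono)

lemma module_hom_mult: "module_hom fscale fscale (\<lambda>g x. f x * g x :: 'a::field)"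
  by (rule module_hom_fscaleI) (auto simp: fun_eq_iff algebra_simps fscale_apply)

lemma monomials_mult:
  assumes "f \<in> monomials c I E" "g \<in> monomials c I F"
  shows "(\<lambda>x. f x * g x) \<in> monomials c I (E+F)"
proof -
  obtain a where a: "\<forall>i\<in>I. a i \<le> E" "f = (\<lambda>x. \<Prod>i\<in>I. c i x ^ a i)"
    using assms(1) by (auto simp: monomials_def)
  obtain b where b: "\<forall>i\<in>I. b i \<le> F" "g = (\<lambda>x. \<Prod>i\<in>I. c i x ^ b i)"
    using assms(2) by (auto simp: monomials_def)
  have "(\<lambda>x. f x * g x) = (\<lambda>x. \<Prod>i\<in>I. c i x ^ (a i + b i))"
    unfolding a b by (simp add: power_add prod.distrib)
  moreover have "\<forall>i\<in>I. a i + b i \<le> E + F" using a b by (simp add: add_mono)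
  ultimately show ?thesis using monomialsI[of I "\<lambda>i. a i + b i"] by simp
qed

lemma polyfuns_mult_span:
  assumes "g \<in> fs.span G" "\<And>g. g \<in> G \<Longrightarrow> (\<lambda>x. f x * g x) \<in> polyfuns c I E"
  shows "(\<lambda>x. f x * g x) \<in> polyfuns c I E"
proof -
  interpret f: module_hom fscale fscale "\<lambda>g x. f x * g x" by (rule module_hom_mult)
  have "(\<lambda>x. f x * g x) \<in> fs.span ((\<lambda>g x. f x * g x) ` G)"
    using assms(1) by (auto simp: f.span_image)
  also have "\<dots> \<subseteq> polyfuns c I E"
    unfolding polyfuns_def using assms(2) by (intro fs.span_minimal) (auto simp: polyfuns_def)
  finally show ?thesis .
qed

lemma polyfuns_mult:
  assumes f: "f \<in> polyfuns c I E" and g: "g \<in> polyfuns c I F"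
  shows "(\<lambda>x. f x * g x) \<in> polyfuns c I (E+F)"
proof -
  have gm: "(\<lambda>x. g x * m x) \<in> polyfuns c I (E+F)" if m: "m \<in> monomials c I E" for m
  proof -
    have "(\<lambda>x. m x * g x) \<in> polyfuns c I (E+F)"
      by (rule polyfuns_mult_span[OF g[unfolded polyfuns_def]])
         (auto simp: polyfuns_def intro: fs.span_base monomials_mult[OF m])
    then show ?thesis by (simp add: mult.commute)
  qed
  have "(\<lambda>x. g x * f x) \<in> polyfuns c I (E+F)"
    by (rule polyfuns_mult_span[OF f[unfolded polyfuns_def] gm])
  then show ?thesis by (simp add: mult.commute)
qed

lemma polyfuns_const: "(\<lambda>x. k) \<in> polyfuns c I E"
proof -
  have "(\<lambda>x. 1) \<in> monomials c I E"
    using monomialsI[of I "\<lambda>_. 0" E c] by simp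
  then have "fscale k (\<lambda>x. 1) \<in> polyfuns c I E" unfolding polyfuns_def
    by (intro fs.span_scale fs.span_base)
  then show ?thesis by (simp add: fscale_def)
qed

lemma polyfuns_coord:
  assumes "i \<in> I" "finite I" shows "c i \<in> polyfuns c I 1"
proof -
  have "(\<lambda>x. \<Prod>j\<in>I. c j x ^ (if j = i then 1 else 0)) = c i"
    using assms by (simp add: fun_eq_iff if_distrib[of "power _"] cong: if_cong)
  moreover have "(\<lambda>x. \<Prod>j\<in>I. c j x ^ (if j = i then 1 else 0)) \<in> monomials c I 1"
    by (rule monomialsI) auto
  ultimately show ?thesis unfolding polyfuns_def by (metis fs.span_base)
qed

lemma polyfuns_scale: "f \<in> polyfuns c I E \<Longrightarrow> (\<lambda>x. k * f x) \<in> polyfuns c I E"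
  unfolding polyfuns_def using fs.span_scale[of f _ k] by (simp add: fscale_def)

lemma polyfuns_sum:
  "(\<And>j. j \<in> J \<Longrightarrow> f j \<in> polyfuns c I E) \<Longrightarrow> (\<lambda>x. \<Sum>j\<in>J. f j x) \<in> polyfuns c I E"
  unfolding polyfuns_def sum_apply[symmetric] by (rule fs.span_sum)

lemma polyfuns_prod:
  assumes "finite J" "\<And>j. j \<in> J \<Longrightarrow> f j \<in> polyfuns c I (e j)"
  shows "(\<lambda>x. \<Prod>j\<in>J. f j x) \<in> polyfuns c I (\<Sum>j\<in>J. e j)"
  using assms
proof (induction J rule: finite_induct)
  case empty then show ?case using polyfuns_const[of 1] by simp
next
  case (insert j J)
  have "(\<lambda>x. f j x * (\<Prod>j\<in>J. f j x)) \<in> polyfuns c I (e j + (\<Sum>j\<in>J. e j))"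
    using insert by (intro polyfuns_mult) auto
  then show ?case using insert by simp
qed

lemma polyfuns_power:
  assumes "f \<in> polyfuns c I E" shows "(\<lambda>x. f x ^ k) \<in> polyfuns c I (k * E)"
proof (induction k)
  case 0 then show ?case using polyfuns_const[of 1] by simp
next
  case (Suc k)
  show ?case using polyfuns_mult[OF assms Suc] by simp
qed

definition entry :: "nat list \<times> nat list \<Rightarrow> (nat list \<Rightarrow> nat list \<Rightarrow> 'a) \<Rightarrow> 'a" where
  "entry v M = M (fst v) (snd v)"

definition positions :: "nat \<Rightarrow> nat \<Rightarrow> (nat list \<times> nat list) set" where
  "positions n d = idx_set n d \<times> idx_set n d"

definition monomial_value :: "((nat list \<times> nat list) \<Rightarrow>\<^sub>0 nat)
    \<Rightarrow> (nat list \<Rightarrow> nat list \<Rightarrow> 'a::comm_ring_1) \<Rightarrow> 'a" where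
  "monomial_value m M = (\<Prod>v \<in> Poly_Mapping.keys m. entry v M ^ Poly_Mapping.lookup m v)"

lemma finite_idx_set: "finite (idx_set n d)"
proof -
  have "idx_set n d \<subseteq> {xs. set xs \<subseteq> {0..<n} \<and> length xs = d}"
    unfolding idx_set_def by (auto simp: in_set_conv_nth)
  moreover have "finite {xs. set xs \<subseteq> {0..<n} \<and> length xs = d}"
    by (rule finite_lists_length_eq) simp
  ultimately show ?thesis by (rule finite_subset)
qed

lemma finite_positions: "finite (positions n d)"
  unfolding positions_def using finite_idx_set by blast

lemma mpeval_eq_sum:
  assumes "finite S" "Poly_Mapping.keys p \<subseteq> S"
  shows "mpeval p M = (\<Sum>m\<in>S. Poly_Mapping.lookup p m * monomial_value m M)"
  unfolding mpeval_def monomial_value_def entry_def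
  by (rule sum.mono_neutral_left) (use assms in \<open>auto simp: in_keys_iff\<close>)

lemma monomial_value_eq_prod:
  assumes "finite V" "Poly_Mapping.keys m \<subseteq> V"
  shows "monomial_value m M = (\<Prod>v\<in>V. entry v M ^ Poly_Mapping.lookup m v)"
  unfolding monomial_value_def
  by (rule prod.mono_neutral_left) (use assms in \<open>auto simp: in_keys_iff\<close>)

lemma monomial_value_in_polyfuns:
  assumes "finite V" "Poly_Mapping.keys m \<subseteq> V" "\<And>v. Poly_Mapping.lookup m v \<le> E"
  shows "monomial_value m \<in> polyfuns entry V E"
  unfolding polyfuns_def monomial_value_eq_prod[OF assms(1,2), abs_def]
  by (rule fs.span_base monomialsI)+ (use assms(3) in blast)

lemma monomial_value_eq_0:
  assumes "M \<in> mats n d" "\<not> Poly_Mapping.keys m \<subseteq> positions n d"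
  shows "monomial_value m M = 0"
proof -
  obtain v where v: "v \<in> Poly_Mapping.keys m" "v \<notin> positions n d" using assms(2) by auto
  then have "entry v M ^ Poly_Mapping.lookup m v = 0"
    using assms(1) by (cases v) (auto simp: mats_def entry_def positions_def in_keys_iff zero_power)
  then show ?thesis unfolding monomial_value_def using v(1) by (intro prod_zero) auto
qed

lemma mpeval_in_polyfuns:
  fixes p :: "'a::field mpoly"
  obtains E f where "f \<in> polyfuns entry (positions n d) E" "\<And>M. M \<in> mats n d \<Longrightarrow> mpeval p M = f M"
proof -
  let ?V = "positions n d"
  let ?P = "{m \<in> Poly_Mapping.keys p. Poly_Mapping.keys m \<subseteq> ?V}"
  define E where "E = (\<Sum>m\<in>Poly_Mapping.keys p. \<Sum>v\<in>Poly_Mapping.keys m. Poly_Mapping.lookup m v)"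
  have E: "Poly_Mapping.lookup m v \<le> E" if "m \<in> Poly_Mapping.keys p" for m v
  proof (cases "v \<in> Poly_Mapping.keys m")
    case True
    have "Poly_Mapping.lookup m v \<le> (\<Sum>v\<in>Poly_Mapping.keys m. Poly_Mapping.lookup m v)"
      by (rule member_le_sum) (use True in auto)
    also have "\<dots> \<le> E"
      unfolding E_def by (rule member_le_sum[of m, OF that]) simp_all
    finally show ?thesis .
  qed (simp add: in_keys_iff)
  define f where "f M = (\<Sum>m\<in>?P. Poly_Mapping.lookup p m * monomial_value m M)" for M
  have "f \<in> polyfuns entry ?V E"
    unfolding f_def
    by (intro polyfuns_sum polyfuns_scale monomial_value_in_polyfuns finite_positions) (use E in auto)
  moreover have "mpeval p M = f M" if M: "M \<in> mats n d" for M
    unfolding mpeval_eq_sum[OF finite_keys order_refl] f_def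
    by (rule sum.mono_neutral_right) (use monomial_value_eq_0[OF M] in auto)
  ultimately show ?thesis using that by blast
qed

lemma fs_subspace_mpeval_functions:
  "fs.subspace {f :: (nat list \<Rightarrow> nat list \<Rightarrow> 'a::field) \<Rightarrow> 'a. \<exists>p. \<forall>M. mpeval p M = f M}"
  (is "fs.subspace ?F")
  unfolding fs.subspace_def
proof (intro conjI ballI allI)
  show "0 \<in> ?F" by (auto intro!: exI[of _ 0] simp: mpeval_def)
next
  fix f g assume "f \<in> ?F" "g \<in> ?F"
  then obtain p q where p: "\<And>M. mpeval p M = f M" and q: "\<And>M. mpeval q M = g M" by auto
  have "mpeval (p + q) M = (f + g) M" for M
  proof -
    let ?S = "Poly_Mapping.keys p \<union> Poly_Mapping.keys q"
    have "mpeval (p + q) M = (\<Sum>m\<in>?S. Poly_Mapping.lookup (p + q) m * monomial_value m M)"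
      by (rule mpeval_eq_sum) (auto dest: keys_add[THEN subsetD])
    also have "\<dots> = mpeval p M + mpeval q M"
      by (simp add: mpeval_eq_sum[of ?S] lookup_add distrib_right sum.distrib)
    finally show ?thesis using p q by simp
  qed
  then show "f + g \<in> ?F" by blast
next
  fix c :: 'a and f assume "f \<in> ?F"
  then obtain p where p: "\<And>M. mpeval p M = f M" by auto
  let ?cp = "Poly_Mapping.map ((*) c) p"
  have lookup_cp: "Poly_Mapping.lookup ?cp m = c * Poly_Mapping.lookup p m" for m
    by (simp add: Poly_Mapping.map.rep_eq when_def)
  have "mpeval ?cp M = fscale c f M" for M
  proof -
    have "mpeval ?cp M = (\<Sum>m\<in>Poly_Mapping.keys p. Poly_Mapping.lookup ?cp m * monomial_value m M)"
      by (rule mpeval_eq_sum) (auto simp: in_keys_iff lookup_cp)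
    also have "\<dots> = c * mpeval p M"
      by (simp add: mpeval_eq_sum[of "Poly_Mapping.keys p"] lookup_cp sum_distrib_left mult.assoc)
    finally show ?thesis using p by (simp add: fscale_apply)
  qed
  then show "fscale c f \<in> ?F" by blast
qed

lemma polyfuns_entry_eq_mpeval:
  fixes f :: "(nat list \<Rightarrow> nat list \<Rightarrow> 'a::field) \<Rightarrow> 'a"
  assumes f: "f \<in> polyfuns entry V E" and V: "finite V"
  obtains p where "\<And>M. mpeval p M = f M"
proof -
  have "\<exists>p. \<forall>M. mpeval p M = g M"
    if g: "g \<in> monomials entry V E" for g :: "(nat list \<Rightarrow> nat list \<Rightarrow> 'a) \<Rightarrow> 'a"
  proof -
    obtain a where a: "g = (\<lambda>M. \<Prod>v\<in>V. entry v M ^ a v)"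
      using g unfolding monomials_def by auto
    define m where "m = Abs_poly_mapping (\<lambda>v. if v \<in> V then a v else 0)"
    have lookup_m: "Poly_Mapping.lookup m = (\<lambda>v. if v \<in> V then a v else 0)"
      unfolding m_def by (rule Abs_poly_mapping_inverse) (use V in \<open>auto intro: finite_subset\<close>)
    have keys_m: "Poly_Mapping.keys m \<subseteq> V" by (auto simp: in_keys_iff lookup_m split: if_splits)
    have "mpeval (Poly_Mapping.single m 1) M = g M" for M
    proof -
      have "mpeval (Poly_Mapping.single m 1) M = monomial_value m M"
        by (simp add: mpeval_def monomial_value_def entry_def)
      also have "\<dots> = g M"
        unfolding monomial_value_eq_prod[OF V keys_m] a by (auto simp: lookup_m intro!: prod.cong)
      finally show ?thesis .
    qed
    then show ?thesis by blast
  qed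
  then have "\<exists>p. \<forall>M. mpeval p M = f M"
    using fs.span_induct[OF f[unfolded polyfuns_def] fs_subspace_mpeval_functions] by blast
  then show ?thesis using that by blast
qed

section \<open>Partial transposes and low PT-rank\<close>

definition outer :: "nat \<Rightarrow> nat \<Rightarrow> (nat list \<Rightarrow> 'a::field) \<Rightarrow> (nat list \<Rightarrow> 'a) \<Rightarrow> (nat list \<Rightarrow> nat list \<Rightarrow> 'a)" where
  "outer n d u v = (\<lambda>i j. if i \<in> idx_set n d \<and> j \<in> idx_set n d then u i * v j else 0)"

lemma mix_length[simp]: "length (mix K a b) = length b"
  by (simp add: mix_def)

lemma mix_nth: "k < length b \<Longrightarrow> mix K a b ! k = (if k \<in> K then a ! k else b ! k)"
  by (simp add: mix_def)

lemma mix_in_idx_set: "i \<in> idx_set n d \<Longrightarrow> j \<in> idx_set n d \<Longrightarrow> mix K j i \<in> idx_set n d"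
  by (simp add: idx_set_def mix_nth)

lemma mix_mix: "length i = length j \<Longrightarrow> mix K (mix K i j) (mix K j i) = i"
  by (rule nth_equalityI) (auto simp: mix_nth)

lemma mix_empty[simp]: "mix {} a b = b"
  by (rule nth_equalityI) (auto simp: mix_nth)

lemma ptrans_in_mats: "ptrans n d K A \<in> mats n d"
  by (auto simp: ptrans_def mats_def)

lemma ptrans_ptrans:
  assumes "A \<in> mats n d" shows "ptrans n d K (ptrans n d K A) = A"
proof (intro ext)
  fix i j
  show "ptrans n d K (ptrans n d K A) i j = A i j"
  proof (cases "i \<in> idx_set n d \<and> j \<in> idx_set n d")
    case True
    then have l: "length i = length j" by (simp add: idx_set_def)
    have "ptrans n d K (ptrans n d K A) i j = A (mix K (mix K i j) (mix K j i)) (mix K (mix K j i) (mix K i j))"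
      using True by (simp add: ptrans_def mix_in_idx_set)
    also have "\<dots> = A i j" using l by (simp add: mix_mix)
    finally show ?thesis .
  next
    case False then show ?thesis using assms by (auto simp: ptrans_def mats_def)
  qed
qed

lemma ptrans_empty: "A \<in> mats n d \<Longrightarrow> ptrans n d {} A = A"
  by (auto simp: ptrans_def mats_def fun_eq_iff)

lemma ptrans_zero[simp]: "ptrans n d K 0 = 0"
  by (auto simp: ptrans_def fun_eq_iff)

lemma outer_restrict1: "outer n d (restrict u (idx_set n d)) v = outer n d u v"
  by (auto simp: outer_def fun_eq_iff)

lemma outer_restrict2: "outer n d u (restrict v (idx_set n d)) = outer n d u v"
  by (auto simp: outer_def fun_eq_iff)

lemma outer_zero: "outer n d (\<lambda>_. 0) v = 0"
  by (auto simp: outer_def fun_eq_iff)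

lemma mrank_one_eq_outer:
  fixes B :: "nat list \<Rightarrow> nat list \<Rightarrow> 'a::field"
  assumes B: "B \<in> mats n d" and r: "mrank n d B = 1"
  shows "\<exists>u v. B = outer n d u v"
proof -
  let ?C = "(\<lambda>j. (\<lambda>i. B i j)) ` idx_set n d"
  obtain Bs where Bs: "Bs \<subseteq> ?C" "fs.independent Bs" "?C \<subseteq> fs.span Bs" "card Bs = fs.dim ?C"
    using fs.basis_exists by blast
  have "card Bs = 1" using Bs(4) r by (simp add: mrank_def)
  then obtain b where b: "Bs = {b}" by (rule card_1_singletonE)
  have "\<forall>j\<in>idx_set n d. \<exists>k. (\<lambda>i. B i j) = fscale k b"
    using Bs(3) unfolding b fs.span_singleton by auto
  then obtain lam where lam: "\<And>j. j \<in> idx_set n d \<Longrightarrow> (\<lambda>i. B i j) = fscale (lam j) b" by metis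
  have "B = outer n d b lam"
  proof (intro ext)
    fix i j
    show "B i j = outer n d b lam i j"
    proof (cases "i \<in> idx_set n d \<and> j \<in> idx_set n d")
      case True
      have "B i j = lam j * b i" using lam[of j] True by (metis fscale_apply)
      then show ?thesis using True by (simp add: outer_def mult.commute)
    next
      case False then show ?thesis using B by (auto simp: outer_def mats_def)
    qed
  qed
  then show ?thesis by blast
qed

lemma pt_basic_single_entry:
  fixes c :: "'a::field"
  assumes ij: "i \<in> idx_set n d" "j \<in> idx_set n d" and c: "c \<noteq> 0"
  shows "pt_basic n d (\<lambda>a b. if (a, b) = (i, j) then c else 0)"
proof -
  let ?E = "(\<lambda>a b. if (a, b) = (i, j) then c else 0)"
  have E: "?E \<in> mats n d" using ij by (auto simp: mats_def)
  let ?w = "(\<lambda>a. if a = i then c else 0)"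
  let ?C = "(\<lambda>j'. (\<lambda>a. ?E a j')) ` idx_set n d"
  have C1: "?C \<subseteq> {0, ?w}" by (auto simp: fun_eq_iff)
  have C2: "?w \<in> ?C" using ij by (auto simp: fun_eq_iff intro!: image_eqI[of _ _ j])
  have "fs.span ?C = fs.span {?w}"
  proof
    show "fs.span ?C \<subseteq> fs.span {?w}"
      using fs.span_mono[OF C1] by simp
    show "fs.span {?w} \<subseteq> fs.span ?C"
      using C2 by (intro fs.span_mono) auto
  qed
  then have "fs.dim ?C = fs.dim {?w}" by (rule fs.span_eq_dim)
  also have "\<dots> = 1"
  proof -
    have "?w \<noteq> 0" using c by (auto simp: fun_eq_iff)
    then have "fs.independent {?w}" by simp
    then show ?thesis by (simp add: fs.dim_eq_card_independent)
  qed
  finally have "mrank n d ?E = 1" by (simp add: mrank_def)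
  then show ?thesis using E ptrans_empty[OF E] unfolding pt_basic_def by auto
qed

text \<open>This makes the \<open>LEAST\<close> in \<open>pt_rank\<close> range over a nonempty set.\<close>
lemma pt_basic_decomposition_exists:
  fixes M :: "nat list \<Rightarrow> nat list \<Rightarrow> 'a::field"
  assumes M: "M \<in> mats n d"
  shows "\<exists>Ms. (\<forall>A\<in>set Ms. pt_basic n d A) \<and> M = sum_list Ms"
proof -
  define T where "T = {t \<in> idx_set n d \<times> idx_set n d. M (fst t) (snd t) \<noteq> 0}"
  have finT: "finite T"
  proof (rule finite_subset)
    show "T \<subseteq> idx_set n d \<times> idx_set n d" unfolding T_def by blast
    show "finite (idx_set n d \<times> idx_set n d)" using finite_idx_set[of n d] by blast
  qed
  define F where "F t = (\<lambda>a b. if (a, b) = t then M (fst t) (snd t) else 0)" for t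
  obtain xs where xs: "set xs = T" "distinct xs" using finite_distinct_list[OF finT] by blast
  have "sum_list (map F xs) = sum F T" using sum_list_distinct_conv_sum_set[OF xs(2), of F] xs(1) by simp
  also have "\<dots> = M"
  proof (intro ext)
    fix a b
    have "sum F T a b = (\<Sum>t\<in>T. F t a b)" by (simp only: sum_apply)
    also have "\<dots> = (\<Sum>t\<in>T. if (a, b) = t then M a b else 0)"
      by (intro sum.cong refl) (auto simp: F_def)
    also have "\<dots> = (if (a, b) \<in> T then M a b else 0)"
      using finT by (rule sum.delta')
    also have "\<dots> = M a b"
    proof (cases "(a, b) \<in> T")
      case False
      then have "M a b = 0" using M unfolding T_def mats_def by auto
      then show ?thesis by simp
    qed simp
    finally show "sum F T a b = M a b" .
  qed
  finally have "M = sum_list (map F xs)" by simp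
  moreover have "\<forall>A\<in>set (map F xs). pt_basic n d A"
  proof
    fix A assume "A \<in> set (map F xs)"
    then obtain t where t: "t \<in> T" "A = F t" using xs by auto
    then obtain i j where "t = (i, j)" "i \<in> idx_set n d" "j \<in> idx_set n d" "M i j \<noteq> 0"
      unfolding T_def by auto
    then show "pt_basic n d A" using t pt_basic_single_entry[of i n d j "M i j"] by (simp add: F_def cong: if_cong)
  qed
  ultimately show ?thesis by blast
qed

lemma pt_basic_eq_ptrans_outer:
  fixes A :: "nat list \<Rightarrow> nat list \<Rightarrow> 'a::field"
  assumes "pt_basic n d A"
  shows "\<exists>K u v. K \<subseteq> {0..<d} \<and> A = ptrans n d K (outer n d u v)"
proof -
  obtain K where K: "K \<subseteq> {0..<d}" "mrank n d (ptrans n d K A) = 1" and A: "A \<in> mats n d"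
    using assms unfolding pt_basic_def by blast
  obtain u v where "ptrans n d K A = outer n d u v" using mrank_one_eq_outer[OF ptrans_in_mats K(2)] by blast
  then have "A = ptrans n d K (outer n d u v)" using ptrans_ptrans[OF A, of K] by simp
  then show ?thesis using K by blast
qed

definition pt_sum :: "nat \<Rightarrow> nat \<Rightarrow> nat \<Rightarrow> (nat \<Rightarrow> nat set) \<Rightarrow> (nat \<Rightarrow> nat list \<Rightarrow> 'a::field)
    \<Rightarrow> (nat \<Rightarrow> nat list \<Rightarrow> 'a) \<Rightarrow> (nat list \<Rightarrow> nat list \<Rightarrow> 'a)" where
  "pt_sum n d R K u v = (\<Sum>t<R. ptrans n d (K t) (outer n d (u t) (v t)))"

text \<open>The parameter sets are extensional (\<open>PiE\<close>), so that over a finite field they are finite.\<close>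

definition pt_patterns :: "nat \<Rightarrow> nat \<Rightarrow> (nat \<Rightarrow> nat set) set" where
  "pt_patterns R d = PiE {0..<R} (\<lambda>_. Pow {0..<d})"

definition pt_factors :: "nat \<Rightarrow> nat \<Rightarrow> nat \<Rightarrow> (nat \<Rightarrow> nat list \<Rightarrow> 'a) set" where
  "pt_factors R n d = PiE {0..<R} (\<lambda>_. PiE (idx_set n d) (\<lambda>_. UNIV))"

lemma sum_list_pt_basic_eq_pt_sum:
  fixes Ms :: "(nat list \<Rightarrow> nat list \<Rightarrow> 'a::field) list"
  assumes basic: "\<forall>A \<in> set Ms. pt_basic n d A" and len: "length Ms \<le> R"
  obtains K u v where "K \<in> pt_patterns R d" "u \<in> pt_factors R n d" "v \<in> pt_factors R n d"
    "sum_list Ms = pt_sum n d R K u v"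
proof -
  let ?s = "length Ms"
  have "\<forall>t<?s. \<exists>K u v. K \<subseteq> {0..<d} \<and> Ms ! t = ptrans n d K (outer n d u v)"
    using basic pt_basic_eq_ptrans_outer by (metis nth_mem)
  then obtain K u v where Kuv:
    "\<And>t. t < ?s \<Longrightarrow> K t \<subseteq> {0..<d} \<and> Ms ! t = ptrans n d (K t) (outer n d (u t) (v t))"
    by metis
  define K' where "K' t = (if t < R then if t < ?s then K t else {} else undefined)" for t
  define u' where
    "u' t = (if t < R then restrict (if t < ?s then u t else (\<lambda>_. 0)) (idx_set n d) else undefined)" for t
  define v' where
    "v' t = (if t < R then restrict (if t < ?s then v t else (\<lambda>_. 0)) (idx_set n d) else undefined)" for t
  have "K' \<in> pt_patterns R d"
    using Kuv by (auto simp: pt_patterns_def K'_def PiE_def Pi_def extensional_def)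
  moreover have "u' \<in> pt_factors R n d" "v' \<in> pt_factors R n d"
    by (auto simp: pt_factors_def u'_def v'_def PiE_def Pi_def extensional_def)
  moreover have "sum_list Ms = pt_sum n d R K' u' v'"
  proof -
    have "pt_sum n d R K' u' v' = (\<Sum>t<R. if t < ?s then Ms ! t else 0)"
      unfolding pt_sum_def
      by (intro sum.cong refl)
         (auto simp: K'_def u'_def v'_def outer_restrict1 outer_restrict2 outer_zero Kuv)
    also have "\<dots> = (\<Sum>t<?s. Ms ! t)"
      by (rule sum.mono_neutral_cong_right) (use len in auto)
    finally show ?thesis by (simp add: sum_list_sum_nth atLeast0LessThan)
  qed
  ultimately show ?thesis using that by blast
qed

lemma pt_rank_le_imp_pt_sum:
  fixes M :: "nat list \<Rightarrow> nat list \<Rightarrow> 'a::field"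
  assumes M: "M \<in> mats n d" and r: "pt_rank n d M \<le> R"
  obtains K u v where "K \<in> pt_patterns R d" "u \<in> pt_factors R n d" "v \<in> pt_factors R n d"
    "M = pt_sum n d R K u v"
proof -
  let ?P = "\<lambda>r. \<exists>Ms. length Ms = r \<and> (\<forall>A \<in> set Ms. pt_basic n d A) \<and> M = sum_list Ms"
  have "\<exists>r. ?P r" using pt_basic_decomposition_exists[OF M] by blast
  from LeastI_ex[OF this] obtain Ms where
    "length Ms = pt_rank n d M" "\<forall>A \<in> set Ms. pt_basic n d A" "M = sum_list Ms"
    unfolding pt_rank_def by blast
  with r that show ?thesis by (metis sum_list_pt_basic_eq_pt_sum)
qed

section \<open>Counting over a finite field\<close>

lemma card_idx_set: "card (idx_set n d) = n ^ d"
proof -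
  have "idx_set n d = {xs. set xs \<subseteq> {0..<n} \<and> length xs = d}"
    unfolding idx_set_def by (auto simp: in_set_conv_nth subset_iff)
  then show ?thesis by (simp add: card_lists_length_eq)
qed

lemma card_mats:
  assumes "finite (UNIV :: 'a set)"
  shows "card (mats n d :: (nat list \<Rightarrow> nat list \<Rightarrow> 'a::zero) set) = CARD('a) ^ (n ^ d * n ^ d)"
proof -
  let ?I = "idx_set n d \<times> idx_set n d"
  let ?P = "PiE ?I (\<lambda>_. UNIV :: 'a set)"
  let ?g = "\<lambda>x. (\<lambda>i j. if (i, j) \<in> ?I then x (i, j) else 0) :: nat list \<Rightarrow> nat list \<Rightarrow> 'a"
  have "?g ` ?P = mats n d"
  proof
    show "?g ` ?P \<subseteq> mats n d" by (auto simp: mats_def)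
    show "mats n d \<subseteq> ?g ` ?P"
    proof
      fix M :: "nat list \<Rightarrow> nat list \<Rightarrow> 'a" assume M: "M \<in> mats n d"
      have "M = ?g (restrict (\<lambda>(i, j). M i j) ?I)"
        using M by (auto simp: mats_def fun_eq_iff)
      moreover have "restrict (\<lambda>(i, j). M i j) ?I \<in> ?P" by simp
      ultimately show "M \<in> ?g ` ?P" by blast
    qed
  qed
  moreover have "inj_on ?g ?P"
  proof
    fix x y assume x: "x \<in> ?P" and y: "y \<in> ?P" and eq: "?g x = ?g y"
    show "x = y"
    proof (rule PiE_ext[OF x y])
      fix ij assume "ij \<in> ?I"
      then show "x ij = y ij" using fun_cong[OF fun_cong[OF eq, of "fst ij"], of "snd ij"] by auto
    qed
  qed
  ultimately have "card (mats n d :: (nat list \<Rightarrow> nat list \<Rightarrow> 'a) set) = card ?P"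
    using card_image by fastforce
  also have "\<dots> = CARD('a) ^ (n ^ d * n ^ d)"
    using finite_idx_set by (simp add: card_PiE card_cartesian_product card_idx_set)
  finally show ?thesis .
qed

lemma finite_pt_patterns: "finite (pt_patterns R d)"
  unfolding pt_patterns_def by (intro finite_PiE) auto

lemma card_pt_patterns: "card (pt_patterns R d) = 2 ^ (d * R)"
  unfolding pt_patterns_def by (simp add: card_PiE card_Pow power_mult)

lemma finite_pt_factors:
  assumes "finite (UNIV :: 'a set)"
  shows "finite (pt_factors R n d :: (nat \<Rightarrow> nat list \<Rightarrow> 'a) set)"
  unfolding pt_factors_def using assms finite_idx_set by (intro finite_PiE) auto

lemma card_pt_factors:
  assumes "finite (UNIV :: 'a set)"
  shows "card (pt_factors R n d :: (nat \<Rightarrow> nat list \<Rightarrow> 'a) set) = CARD('a) ^ (n ^ d * R)"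
  unfolding pt_factors_def using assms finite_idx_set by (simp add: card_PiE card_idx_set power_mult)

lemma card_low_pt_rank_le:
  assumes fin: "finite (UNIV :: 'a::field set)"
  shows "card {M :: nat list \<Rightarrow> nat list \<Rightarrow> 'a. M \<in> mats n d \<and> pt_rank n d M \<le> R}
     \<le> 2 ^ (d * R) * CARD('a) ^ (2 * n ^ d * R)"
proof -
  let ?f = "\<lambda>(K, u, v). pt_sum n d R K u v :: nat list \<Rightarrow> nat list \<Rightarrow> 'a"
  let ?F = "pt_factors R n d :: (nat \<Rightarrow> nat list \<Rightarrow> 'a) set"
  let ?D = "pt_patterns R d \<times> ?F \<times> ?F"
  have finD: "finite ?D"
    by (intro finite_cartesian_product finite_pt_patterns finite_pt_factors[OF fin])
  have "{M :: nat list \<Rightarrow> nat list \<Rightarrow> 'a. M \<in> mats n d \<and> pt_rank n d M \<le> R} \<subseteq> ?f ` ?D"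
  proof clarify
    fix M :: "nat list \<Rightarrow> nat list \<Rightarrow> 'a" assume "M \<in> mats n d" "pt_rank n d M \<le> R"
    then obtain K u v where "K \<in> pt_patterns R d" "u \<in> pt_factors R n d" "v \<in> pt_factors R n d"
        "M = pt_sum n d R K u v"
      by (rule pt_rank_le_imp_pt_sum)
    then show "M \<in> ?f ` ?D" by (auto intro!: image_eqI[of _ _ "(K, u, v)"])
  qed
  then have "card {M :: nat list \<Rightarrow> nat list \<Rightarrow> 'a. M \<in> mats n d \<and> pt_rank n d M \<le> R} \<le> card (?f ` ?D)"
    using finD by (intro card_mono) auto
  also have "\<dots> \<le> card ?D" using finD by (rule card_image_le)
  also have "\<dots> = 2 ^ (d * R) * CARD('a) ^ (2 * n ^ d * R)"
    by (simp add: card_cartesian_product card_pt_patterns card_pt_factors[OF fin] power_add[symmetric]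
        mult_2 add_mult_distrib)
  finally show ?thesis .
qed

lemma card_field_ge_2:
  assumes "finite (UNIV :: 'a::field set)"
  shows "2 \<le> CARD('a)"
proof -
  have "card {0::'a, 1} \<le> CARD('a)" using assms by (intro card_mono) auto
  then show ?thesis by simp
qed

lemma mult_le_power:
  fixes n :: nat
  assumes "2 \<le> n" "1 \<le> d"
  shows "d * n \<le> n ^ d"
proof -
  have "d - 1 < 2 ^ (d - 1)" by (rule less_exp)
  also have "(2::nat) ^ (d - 1) \<le> n ^ (d - 1)" by (rule power_mono) (use assms in auto)
  finally have "d * n \<le> n ^ (d - 1) * n" using assms by simp
  also have "\<dots> = n ^ d" using assms by (simp add: power_Suc2[symmetric])
  finally show ?thesis .
qed

text \<open>The term \<open>d R\<close> of the parameter count is absorbed into \<open>\<epsilon> N\<^sup>2\<close> using \<open>d n \<le> N\<close>.\<close>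
lemma pt_count_exponent_gap:
  fixes \<epsilon> :: real
  assumes n: "2 \<le> n" and d: "1 \<le> d" and \<epsilon>: "0 < \<epsilon>" "1 \<le> \<epsilon> * n" "\<epsilon> \<le> n"
    and R: "real R \<le> (1/2 - \<epsilon>) * real (n ^ d)"
  shows "real (d * R + 2 * n ^ d * R) + \<epsilon> * n \<le> real (n ^ d * n ^ d)"
proof -
  define N where "N = n ^ d"
  have dn: "real (d * n) \<le> N" unfolding N_def of_nat_le_iff by (rule mult_le_power[OF n d])
  have "real d \<le> real d * (\<epsilon> * n)" using \<epsilon>(2) by (simp add: mult_le_cancel_left1)
  also have "\<dots> = \<epsilon> * real (d * n)" by simp
  also have "\<dots> \<le> \<epsilon> * N" using dn \<epsilon>(1) by (intro mult_left_mono) auto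
  finally have dN: "real d \<le> \<epsilon> * N" .
  have nN: "real n \<le> N" unfolding N_def of_nat_le_iff using n d by (simp add: power_increasing[of 1 d n, simplified])
  have NN: "real N \<le> N * N" using nN n by (simp add: mult_le_cancel_left1)
  show ?thesis
  proof (cases "R = 0")
    case True
    have "\<epsilon> * n \<le> real n * real n" using \<epsilon>(3) by (intro mult_right_mono) auto
    also have "\<dots> \<le> real N * real N" using nN by (intro mult_mono) auto
    finally show ?thesis using True by (simp add: N_def)
  next
    case False
    have dNN: "real d * N \<le> \<epsilon> * (real N * N)" using mult_right_mono[OF dN, of N] by (simp add: mult.assoc)
    have "0 \<le> \<epsilon> * (real d * N)" using \<epsilon>(1) by simp
    have "real (d * R + 2 * N * R) = (real d + 2 * N) * real R" by (simp add: algebra_simps)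
    also have "\<dots> \<le> (real d + 2 * N) * ((1/2 - \<epsilon>) * N)"
      using R by (intro mult_left_mono) (auto simp: N_def)
    also have "\<dots> = real d * N / 2 - \<epsilon> * (real d * N) + real N * N - 2 * (\<epsilon> * (real N * N))"
      by (simp add: algebra_simps)
    also have "\<dots> \<le> real N * N - 3/2 * (\<epsilon> * (real N * N))"
      using dNN \<open>0 \<le> \<epsilon> * (real d * N)\<close> by linarith
    finally have "real (d * R + 2 * N * R) \<le> real N * N - 3/2 * (\<epsilon> * (real N * N))" .
    moreover have "\<epsilon> * n \<le> \<epsilon> * (real N * N)"
      using \<epsilon>(1) nN NN by (intro mult_left_mono) auto
    moreover have "0 \<le> \<epsilon> * (real N * N)" using \<epsilon>(1) by simp
    ultimately show ?thesis by (simp add: N_def)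
  qed
qed

lemma card_real_pt_rank_le:
  assumes fin: "finite (UNIV :: 'a::field set)"
  shows "card {M :: nat list \<Rightarrow> nat list \<Rightarrow> 'a. M \<in> mats n d \<and> real (pt_rank n d M) \<le> x}
    \<le> CARD('a) ^ (d * nat \<lfloor>x\<rfloor> + 2 * n ^ d * nat \<lfloor>x\<rfloor>)"
proof -
  let ?R = "nat \<lfloor>x\<rfloor>"
  have q: "2 \<le> CARD('a)" by (rule card_field_ge_2[OF fin])
  have "card {M :: nat list \<Rightarrow> nat list \<Rightarrow> 'a. M \<in> mats n d \<and> real (pt_rank n d M) \<le> x}
      \<le> card {M :: nat list \<Rightarrow> nat list \<Rightarrow> 'a. M \<in> mats n d \<and> pt_rank n d M \<le> ?R}"
  proof (rule card_mono)
    show "finite {M :: nat list \<Rightarrow> nat list \<Rightarrow> 'a. M \<in> mats n d \<and> pt_rank n d M \<le> ?R}"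
    proof (rule finite_subset)
      show "finite (mats n d :: (nat list \<Rightarrow> nat list \<Rightarrow> 'a) set)"
        by (rule card_ge_0_finite) (use card_mats[OF fin, of n d] q in simp)
    qed auto
  qed (auto intro: le_nat_floor)
  also have "\<dots> \<le> 2 ^ (d * ?R) * CARD('a) ^ (2 * n ^ d * ?R)"
    by (rule card_low_pt_rank_le[OF fin])
  also have "\<dots> \<le> CARD('a) ^ (d * ?R) * CARD('a) ^ (2 * n ^ d * ?R)"
    using q by (simp add: power_mono)
  finally show ?thesis by (simp add: power_add)
qed

lemma low_pt_rank_fraction_le:
  fixes \<epsilon> :: real
  assumes fin: "finite (UNIV :: 'a::field set)"
    and n: "2 \<le> n" and d: "1 \<le> d" and \<epsilon>: "0 < \<epsilon>" "1 \<le> \<epsilon> * n" "\<epsilon> \<le> n"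
  shows "real (card {M :: nat list \<Rightarrow> nat list \<Rightarrow> 'a. M \<in> mats n d \<and>
                     real (pt_rank n d M) \<le> (1/2 - \<epsilon>) * real n ^ d})
         / real (card (mats n d :: (nat list \<Rightarrow> nat list \<Rightarrow> 'a) set)) \<le> 1 / (\<epsilon> * n)"
    (is "real (card ?S) / _ \<le> _")
proof (cases "(1/2 - \<epsilon>) * real n ^ d < 0")
  case True
  then have S: "?S = {}" by (auto simp: not_le[symmetric])
  show ?thesis unfolding S using \<epsilon> by simp
next
  case False
  define N where "N = n ^ d"
  define q where "q = CARD('a)"
  define R where "R = nat \<lfloor>(1/2 - \<epsilon>) * real N\<rfloor>"
  define a where "a = d * R + 2 * N * R"
  have q: "2 \<le> q" unfolding q_def by (rule card_field_ge_2[OF fin])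
  have "real R \<le> (1/2 - \<epsilon>) * real N"
    unfolding R_def using False by (intro of_nat_floor) (simp add: N_def)
  then have gap: "real a + \<epsilon> * n \<le> real (N * N)"
    unfolding a_def N_def by (rule pt_count_exponent_gap[OF n d \<epsilon>])
  define m where "m = N * N - a"
  have "a \<le> N * N" using gap \<epsilon>(1,2) by linarith
  then have m: "N * N = a + m" "\<epsilon> * n \<le> real m"
    using gap by (simp_all add: m_def)
  have "card ?S \<le> q ^ a"
    using card_real_pt_rank_le[OF fin, of n d] by (simp add: q_def a_def R_def N_def)
  then have S: "real (card ?S) \<le> real q ^ a" unfolding of_nat_power[symmetric] of_nat_le_iff .
  have "m < 2 ^ m" by (rule less_exp)
  also have "(2::nat) ^ m \<le> q ^ m" using q by (rule power_mono) simp
  finally have "real m < real q ^ m" unfolding of_nat_power[symmetric] of_nat_less_iff .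
  then have "\<epsilon> * n \<le> real q ^ m" using m(2) by linarith
  have mats: "card (mats n d :: (nat list \<Rightarrow> nat list \<Rightarrow> 'a) set) = q ^ a * q ^ m"
    unfolding card_mats[OF fin] q_def[symmetric] N_def[symmetric] m(1) power_add ..
  have "real (card ?S) / real (card (mats n d :: (nat list \<Rightarrow> nat list \<Rightarrow> 'a) set))
      \<le> real q ^ a / real (card (mats n d :: (nat list \<Rightarrow> nat list \<Rightarrow> 'a) set))"
    by (rule divide_right_mono[OF S]) simp
  also have "\<dots> = 1 / real q ^ m" unfolding mats using q by simp
  also have "\<dots> \<le> 1 / (\<epsilon> * n)"
    using \<open>\<epsilon> * n \<le> real q ^ m\<close> \<epsilon> n q by (intro divide_left_mono mult_pos_pos) auto
  finally show ?thesis .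
qed

lemma low_pt_rank_fraction_tendsto_0:
  fixes \<epsilon> :: real and d :: "nat \<Rightarrow> nat"
  assumes fin: "finite (UNIV :: 'a::field set)" and \<epsilon>: "0 < \<epsilon>" and d: "\<And>n. 1 \<le> d n"
  shows "(\<lambda>n. real (card {M :: nat list \<Rightarrow> nat list \<Rightarrow> 'a. M \<in> mats n (d n) \<and>
                      real (pt_rank n (d n) M) \<le> (1/2 - \<epsilon>) * real n ^ d n})
              / real (card (mats n (d n) :: (nat list \<Rightarrow> nat list \<Rightarrow> 'a) set))) \<longlonglongrightarrow> 0"
proof (rule tendsto_sandwich[of "\<lambda>_. 0" _ _ "\<lambda>n. inverse \<epsilon> * inverse (real n)"])
  have "\<forall>\<^sub>F n in sequentially. max 2 (max (1 / \<epsilon>) \<epsilon>) \<le> real n"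
    using filterlim_real_sequentially unfolding filterlim_at_top by blast
  then show "\<forall>\<^sub>F n in sequentially. (real (card {M :: nat list \<Rightarrow> nat list \<Rightarrow> 'a. M \<in> mats n (d n) \<and>
                      real (pt_rank n (d n) M) \<le> (1/2 - \<epsilon>) * real n ^ d n})
              / real (card (mats n (d n) :: (nat list \<Rightarrow> nat list \<Rightarrow> 'a) set)))
      \<le> inverse \<epsilon> * inverse (real n)"
  proof eventually_elim
    case (elim n)
    then have "1 \<le> \<epsilon> * n" using \<epsilon> by (simp add: field_simps)
    with elim show ?case
      using low_pt_rank_fraction_le[OF fin _ d \<epsilon>] by (simp add: field_simps)
  qed
  show "(\<lambda>n. inverse \<epsilon> * inverse (real n)) \<longlonglongrightarrow> 0"
    by (intro tendsto_mult_right_zero lim_inverse_n)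
qed auto

section \<open>Hilbert functions of sets of matrices\<close>

text \<open>Functions on a set \<open>X\<close> are modelled as functions extended by zero outside \<open>X\<close>, and the
  Hilbert function \<open>hilbert_fn n d X D\<close> is the dimension of the space of functions on \<open>X\<close>
  given by polynomials in the entries with all exponents at most \<open>D\<close>.\<close>

definition zero_outside :: "'x set \<Rightarrow> ('x \<Rightarrow> 'a::zero) \<Rightarrow> ('x \<Rightarrow> 'a)" where
  "zero_outside X g = (\<lambda>x. if x \<in> X then g x else 0)"

definition hilbert_fn :: "nat \<Rightarrow> nat \<Rightarrow> (nat list \<Rightarrow> nat list \<Rightarrow> 'a::field) set \<Rightarrow> nat \<Rightarrow> nat" where
  "hilbert_fn n d X D = fs.dim (zero_outside X ` polyfuns entry (positions n d) D)"

lemma module_hom_zero_outside: "module_hom fscale fscale (zero_outside X :: ('x \<Rightarrow> 'a::field) \<Rightarrow> _)"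
  by (rule module_hom_fscaleI) (auto simp: zero_outside_def fun_eq_iff fscale_apply)

lemma zero_outside_zero_outside: "Y \<subseteq> X \<Longrightarrow> zero_outside Y (zero_outside X g) = zero_outside Y g"
  by (auto simp: zero_outside_def fun_eq_iff)

lemma zero_outside_polyfuns:
  "zero_outside X ` polyfuns c I D = fs.span (zero_outside X ` monomials c I D)"
proof -
  interpret r: module_hom fscale fscale "zero_outside X" by (rule module_hom_zero_outside)
  show ?thesis unfolding polyfuns_def by (simp add: r.span_image)
qed

lemma span_zero_outside_polyfuns:
  "fs.span (zero_outside X ` polyfuns c I D) = zero_outside X ` polyfuns c I D"
  by (simp add: zero_outside_polyfuns fs.span_span)

lemma finite_zero_outside_monomials: "finite I \<Longrightarrow> finite (zero_outside X ` monomials c I D)"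
  using finite_monomials by blast

lemma hilbert_fn_mono_degree:
  assumes "D \<le> D'" shows "hilbert_fn n d X D \<le> hilbert_fn n d X D'"
  unfolding hilbert_fn_def
proof (rule fs_dim_le_if_subset_span)
  show "zero_outside X ` polyfuns entry (positions n d) D
      \<subseteq> fs.span (zero_outside X ` polyfuns entry (positions n d) D')"
    using polyfuns_mono[OF assms] fs.span_superset by blast
  show "zero_outside X ` polyfuns entry (positions n d) D'
      \<subseteq> fs.span (zero_outside X ` monomials entry (positions n d) D')"
    by (simp add: zero_outside_polyfuns)
qed (rule finite_zero_outside_monomials[OF finite_positions])

lemma hilbert_fn_mono:
  assumes "Y \<subseteq> X" shows "hilbert_fn n d Y D \<le> hilbert_fn n d X D"
proof -
  have "hilbert_fn n d Y D = fs.dim (zero_outside Y ` zero_outside X ` polyfuns entry (positions n d) D)"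
    by (simp only: hilbert_fn_def image_image zero_outside_zero_outside[OF assms])
  also have "\<dots> \<le> hilbert_fn n d X D"
    unfolding hilbert_fn_def
    by (rule fs_dim_image_le[OF module_hom_zero_outside,
          where T = "zero_outside X ` monomials entry (positions n d) D"])
       (simp_all add: zero_outside_polyfuns finite_zero_outside_monomials finite_positions)
  finally show ?thesis .
qed

lemma hilbert_fn_pos:
  fixes X :: "(nat list \<Rightarrow> nat list \<Rightarrow> 'a::field) set"
  assumes "X \<noteq> {}" shows "1 \<le> hilbert_fn n d X D"
proof -
  let ?w = "zero_outside X (\<lambda>_. 1 :: 'a)"
  let ?U = "zero_outside X ` polyfuns entry (positions n d) D"
  have "?w \<noteq> 0" using assms by (auto simp: zero_outside_def fun_eq_iff)
  then have "fs.independent {?w}" by simp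
  moreover have "{?w} \<subseteq> fs.span ?U" using polyfuns_const by (blast intro: fs.span_base)
  moreover have "?U \<subseteq> fs.span (zero_outside X ` monomials entry (positions n d) D)"
    by (simp add: zero_outside_polyfuns)
  ultimately have "card {?w} \<le> fs.dim ?U"
    by (rule fs_card_independent_le_dim[OF _ _ _ finite_zero_outside_monomials[OF finite_positions]])
  then show ?thesis by (simp add: hilbert_fn_def)
qed

lemma hilbert_fn_empty: "hilbert_fn n d {} D = 0"
proof -
  have "zero_outside {} ` polyfuns entry (positions n d) D \<subseteq> fs.span ({} :: ((nat list \<Rightarrow> nat list \<Rightarrow> 'a::field) \<Rightarrow> 'a) set)"
    by (auto simp: zero_outside_def fun_eq_iff)
  from fs.dim_le_card[OF this] show ?thesis by (simp add: hilbert_fn_def)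
qed

lemma hilbert_fn_Un_le: "hilbert_fn n d (A \<union> B) D \<le> hilbert_fn n d A D + hilbert_fn n d B D"
proof -
  let ?V = "positions n d"
  let ?R1 = "zero_outside A ` polyfuns entry ?V D"
  let ?R2 = "zero_outside (B - A) ` polyfuns entry ?V D"
  let ?T = "zero_outside A ` monomials entry ?V D \<union> zero_outside (B - A) ` monomials entry ?V D"
  have "zero_outside (A \<union> B) ` polyfuns entry ?V D \<subseteq> fs.span (?R1 \<union> ?R2)"
  proof
    fix y assume "y \<in> zero_outside (A \<union> B) ` polyfuns entry ?V D"
    then obtain g where g: "g \<in> polyfuns entry ?V D" "y = zero_outside (A \<union> B) g" by blast
    have "y = zero_outside A g + zero_outside (B - A) g" using g(2) by (auto simp: zero_outside_def fun_eq_iff)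
    moreover have "zero_outside A g \<in> fs.span (?R1 \<union> ?R2)" "zero_outside (B - A) g \<in> fs.span (?R1 \<union> ?R2)"
      using g(1) by (auto intro: fs.span_base)
    ultimately show "y \<in> fs.span (?R1 \<union> ?R2)" by (simp add: fs.span_add)
  qed
  moreover have "?R1 \<union> ?R2 \<subseteq> fs.span ?T"
    unfolding zero_outside_polyfuns using fs.span_mono[of _ ?T] by blast
  ultimately have "hilbert_fn n d (A \<union> B) D \<le> fs.dim (?R1 \<union> ?R2)"
    unfolding hilbert_fn_def
    by (intro fs_dim_le_if_subset_span) (auto intro: finite_zero_outside_monomials finite_positions)
  also have "\<dots> \<le> fs.dim ?R1 + fs.dim ?R2"
    by (rule fs_dim_Un_le[of _ "zero_outside A ` monomials entry ?V D" _
          "zero_outside (B - A) ` monomials entry ?V D"])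
       (auto simp: zero_outside_polyfuns finite_zero_outside_monomials finite_positions)
  also have "fs.dim ?R2 \<le> hilbert_fn n d B D"
    using hilbert_fn_mono[of "B - A" B n d D] unfolding hilbert_fn_def by blast
  finally show ?thesis by (simp only: hilbert_fn_def)
qed

lemma hilbert_fn_UN_le:
  assumes "finite F"
  shows "hilbert_fn n d (\<Union>k\<in>F. A k) D \<le> (\<Sum>k\<in>F. hilbert_fn n d (A k) D)"
  using assms
proof (induction F rule: finite_induct)
  case empty then show ?case by (simp add: hilbert_fn_empty)
next
  case (insert k F)
  have "hilbert_fn n d (\<Union>k\<in>insert k F. A k) D \<le> hilbert_fn n d (A k) D + hilbert_fn n d (\<Union>k\<in>F. A k) D"
    using hilbert_fn_Un_le by simp
  with insert show ?case by simp
qed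

text \<open>A polynomial vanishing on \<open>S\<close> vanishes on its closure, so restriction from the closure
  to \<open>S\<close> is injective on polynomial functions.\<close>
lemma hilbert_fn_zclosure_le:
  fixes S :: "(nat list \<Rightarrow> nat list \<Rightarrow> 'a::field) set"
  assumes S: "S \<subseteq> mats n d"
  shows "hilbert_fn n d (zclosure n d S) D \<le> hilbert_fn n d S D"
proof -
  let ?cl = "zclosure n d S"
  let ?U = "zero_outside ?cl ` polyfuns entry (positions n d) D"
  interpret r: module_hom fscale fscale "zero_outside S" by (rule module_hom_zero_outside)
  have S_cl: "S \<subseteq> ?cl" unfolding zclosure_def by blast
  have inj: "inj_on (zero_outside S) (fs.span ?U)"
  proof (subst r.inj_on_iff_eq_0[OF fs.subspace_span], intro ballI impI)
    fix x assume x: "x \<in> fs.span ?U" and x0: "zero_outside S x = 0"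
    then obtain g where g: "g \<in> polyfuns entry (positions n d) D" "x = zero_outside ?cl g"
      unfolding span_zero_outside_polyfuns by blast
    obtain q where q: "\<And>M. mpeval q M = g M"
      using polyfuns_entry_eq_mpeval[OF g(1) finite_positions] by blast
    have "g M = 0" if "M \<in> S" for M
      using fun_cong[OF x0, of M] g(2) S_cl that by (auto simp: zero_outside_def)
    then have "S \<subseteq> zvanish n d {q}" using S q by (auto simp: zvanish_def)
    moreover have "zclosed n d (zvanish n d {q})" unfolding zclosed_def by blast
    ultimately have "?cl \<subseteq> zvanish n d {q}" unfolding zclosure_def by blast
    then show "x = 0" using g(2) q by (auto simp: zvanish_def zero_outside_def fun_eq_iff)
  qed
  have "hilbert_fn n d (zclosure n d S) D = fs.dim (zero_outside S ` ?U)"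
    unfolding hilbert_fn_def by (rule fs_dim_image_eq[OF module_hom_zero_outside inj, symmetric])
  also have "zero_outside S ` ?U = zero_outside S ` polyfuns entry (positions n d) D"
    by (simp only: image_image zero_outside_zero_outside[OF S_cl])
  finally show ?thesis by (simp add: hilbert_fn_def)
qed

text \<open>Pulling back along a parametrisation whose entries are quadratic in the coordinates
  \<open>cp j\<close> turns exponent bound \<open>D\<close> in the entries into exponent bound \<open>2 |V| D\<close> in the
  parameters.\<close>
lemma hilbert_fn_range_le:
  fixes \<phi> :: "'y \<Rightarrow> (nat list \<Rightarrow> nat list \<Rightarrow> 'a::field)" and cp :: "'j \<Rightarrow> 'y \<Rightarrow> 'a"
  assumes J: "finite J" and coord: "\<And>v. v \<in> positions n d \<Longrightarrow> (\<lambda>y. entry v (\<phi> y)) \<in> polyfuns cp J 2"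
  shows "hilbert_fn n d (range \<phi>) D \<le> (2 * card (positions n d) * D + 1) ^ card J"
proof -
  let ?V = "positions n d"
  let ?E = "2 * card ?V * D"
  let ?U = "zero_outside (range \<phi>) ` polyfuns entry ?V D"
  let ?L = "\<lambda>h :: (nat list \<Rightarrow> nat list \<Rightarrow> 'a) \<Rightarrow> 'a. (\<lambda>y. h (\<phi> y))"
  have lin: "module_hom fscale fscale ?L" by (rule module_hom_fscaleI) (auto simp: fun_eq_iff fscale_apply)
  interpret L: module_hom fscale fscale ?L by (rule lin)
  have inj: "inj_on ?L (fs.span ?U)"
  proof (subst L.inj_on_iff_eq_0[OF fs.subspace_span], intro ballI impI)
    fix x assume "x \<in> fs.span ?U" and x0: "?L x = 0"
    then obtain g where g: "x = zero_outside (range \<phi>) g" unfolding span_zero_outside_polyfuns by blast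
    show "x = 0"
    proof
      fix M show "x M = 0 M"
        using fun_cong[OF x0] g by (cases "M \<in> range \<phi>") (auto simp: zero_outside_def)
    qed
  qed
  have "?L m \<in> polyfuns cp J ?E" if m: "m \<in> monomials entry ?V D" for m
  proof -
    obtain a where a: "\<forall>v\<in>?V. a v \<le> D" "m = (\<lambda>M. \<Prod>v\<in>?V. entry v M ^ a v)"
      using m unfolding monomials_def by blast
    have "(\<lambda>y. \<Prod>v\<in>?V. entry v (\<phi> y) ^ a v) \<in> polyfuns cp J (\<Sum>v\<in>?V. a v * 2)"
      by (rule polyfuns_prod[OF finite_positions]) (rule polyfuns_power[OF coord])
    moreover have "(\<Sum>v\<in>?V. a v * 2) \<le> ?E"
      using a(1) sum_mono[of ?V "\<lambda>v. a v * 2" "\<lambda>_. D * 2"] by simp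
    ultimately show ?thesis using polyfuns_mono a(2) by blast
  qed
  then have "?L ` polyfuns entry ?V D \<subseteq> polyfuns cp J ?E"
    unfolding polyfuns_def L.span_image[symmetric] by (intro fs.span_minimal) (auto simp: polyfuns_def)
  moreover have "?L (zero_outside (range \<phi>) g) = ?L g" for g by (auto simp: zero_outside_def)
  ultimately have LU: "?L ` ?U \<subseteq> polyfuns cp J ?E" by auto
  have "hilbert_fn n d (range \<phi>) D = fs.dim (?L ` ?U)"
    unfolding hilbert_fn_def by (rule fs_dim_image_eq[OF lin inj, symmetric])
  also have "\<dots> \<le> fs.dim (polyfuns cp J ?E)"
    by (rule fs_dim_le_if_subset_span[of _ _ "monomials cp J ?E"])
       (use LU fs.span_superset in \<open>auto simp: polyfuns_def finite_monomials J\<close>)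
  also have "\<dots> \<le> (?E + 1) ^ card J" by (rule dim_polyfuns_le[OF J])
  finally show ?thesis .
qed

lemma zirreducible_vanishing_product:
  fixes p q :: "'a::idom mpoly"
  assumes X: "zirreducible n d X" and pq: "\<And>M. M \<in> X \<Longrightarrow> mpeval p M * mpeval q M = 0"
    and p: "x \<in> X" "mpeval p x \<noteq> 0"
  shows "\<And>M. M \<in> X \<Longrightarrow> mpeval q M = 0"
proof -
  obtain P where P: "X = zvanish n d P" using X unfolding zirreducible_def zclosed_def by blast
  have "X = zvanish n d (insert p P) \<union> zvanish n d (insert q P)"
    using pq by (auto simp: P zvanish_def)
  moreover have "zclosed n d (zvanish n d (insert p P))" "zclosed n d (zvanish n d (insert q P))"
    unfolding zclosed_def by blast+
  moreover have "X \<noteq> zvanish n d (insert p P)" using p by (auto simp: zvanish_def)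
  ultimately have "X = zvanish n d (insert q P)" using X unfolding zirreducible_def by blast
  then show "\<And>M. M \<in> X \<Longrightarrow> mpeval q M = 0" by (auto simp: zvanish_def)
qed

lemma inj_on_mult_zero_outside_polyfuns:
  assumes X: "zirreducible n d X" and f: "f \<in> polyfuns entry (positions n d) E"
    and x: "x \<in> X" "f x \<noteq> 0"
  shows "inj_on (\<lambda>g M. f M * g M) (fs.span (zero_outside X ` polyfuns entry (positions n d) D))"
proof -
  interpret mult: module_hom fscale fscale "\<lambda>g M. f M * g M" by (rule module_hom_mult)
  show ?thesis
  proof (subst mult.inj_on_iff_eq_0[OF fs.subspace_span], intro ballI impI)
    fix y assume "y \<in> fs.span (zero_outside X ` polyfuns entry (positions n d) D)"
      and y0: "(\<lambda>M. f M * y M) = 0"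
    then obtain g where g: "g \<in> polyfuns entry (positions n d) D" "y = zero_outside X g"
      unfolding span_zero_outside_polyfuns by blast
    obtain p where p: "\<And>M. mpeval p M = f M"
      using polyfuns_entry_eq_mpeval[OF f finite_positions] by blast
    obtain q where q: "\<And>M. mpeval q M = g M"
      using polyfuns_entry_eq_mpeval[OF g(1) finite_positions] by blast
    have "mpeval p M * mpeval q M = 0" if "M \<in> X" for M
      using fun_cong[OF y0, of M] that by (simp add: p q g(2) zero_outside_def)
    then have "\<And>M. M \<in> X \<Longrightarrow> g M = 0"
      using zirreducible_vanishing_product[OF X _ x(1)] x(2) p q by metis
    then show "y = 0" using g(2) by (auto simp: zero_outside_def fun_eq_iff)
  qed
qed

text \<open>The key estimate along a chain: multiplication by a polynomial \<open>f\<close> of degree \<open>e\<close> that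
  vanishes on \<open>Y\<close> but not on \<open>X\<close> embeds the functions of degree \<open>D - e\<close> on \<open>X\<close> into the
  kernel of restriction from \<open>X\<close> to \<open>Y\<close>.\<close>
lemma hilbert_fn_step:
  fixes X Y :: "(nat list \<Rightarrow> nat list \<Rightarrow> 'a::field) set"
  assumes X: "zirreducible n d X" and Y: "zclosed n d Y" and YX: "Y \<subset> X"
  obtains e where "1 \<le> e" "\<And>D. e \<le> D \<Longrightarrow> hilbert_fn n d Y D + hilbert_fn n d X (D - e) \<le> hilbert_fn n d X D"
proof -
  let ?V = "positions n d"
  obtain PX where PX: "X = zvanish n d PX" using X unfolding zirreducible_def zclosed_def by blast
  obtain PY where PY: "Y = zvanish n d PY" using Y unfolding zclosed_def by blast
  obtain x where x: "x \<in> X" "x \<notin> Y" using YX by blast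
  have x_mats: "x \<in> mats n d" using x(1) PX by (simp add: zvanish_def)
  then obtain p where p: "p \<in> PY" "mpeval p x \<noteq> 0" using x(2) PY by (auto simp: zvanish_def)
  obtain E0 f where f: "f \<in> polyfuns entry ?V E0" "\<And>M. M \<in> mats n d \<Longrightarrow> mpeval p M = f M"
    using mpeval_in_polyfuns[where p = p and n = n and d = d] by blast
  define e where "e = max E0 1"
  have fe: "f \<in> polyfuns entry ?V e" using polyfuns_mono[of E0 e] f(1) by (auto simp: e_def)
  have fY: "\<And>M. M \<in> Y \<Longrightarrow> f M = 0" using f(2) p(1) PY by (auto simp: zvanish_def)
  have fx: "f x \<noteq> 0" using f(2) p(2) x_mats by auto
  have "hilbert_fn n d Y D + hilbert_fn n d X (D - e) \<le> hilbert_fn n d X D" if De: "e \<le> D" for D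
  proof -
    let ?G = "zero_outside X ` monomials entry ?V D"
    let ?U' = "zero_outside X ` polyfuns entry ?V (D - e)"
    let ?\<mu> = "\<lambda>g M. f M * g M"
    have span_G: "fs.span ?G = zero_outside X ` polyfuns entry ?V D" by (simp add: zero_outside_polyfuns)
    have W: "?\<mu> ` ?U' \<subseteq> fs.span ?G"
    proof
      fix y assume "y \<in> ?\<mu> ` ?U'"
      then obtain g where g: "g \<in> polyfuns entry ?V (D - e)" "y = ?\<mu> (zero_outside X g)" by auto
      have "?\<mu> g \<in> polyfuns entry ?V D" using polyfuns_mult[OF fe g(1)] De by simp
      moreover have "y = zero_outside X (?\<mu> g)" using g(2) by (auto simp: zero_outside_def fun_eq_iff)
      ultimately show "y \<in> fs.span ?G" unfolding span_G by blast
    qed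
    have "fs.dim (zero_outside Y ` fs.span ?G) + fs.dim (?\<mu> ` ?U') \<le> fs.dim (fs.span ?G)"
      by (rule fs_dim_image_add_dim_kernel_le[OF module_hom_zero_outside _ W])
         (use finite_zero_outside_monomials[OF finite_positions] fY
           in \<open>auto simp: zero_outside_def fun_eq_iff\<close>)
    moreover have "fs.dim (?\<mu> ` ?U') = fs.dim ?U'"
      using fs_dim_image_eq[OF module_hom_mult inj_on_mult_zero_outside_polyfuns[OF X f(1) x(1) fx]] .
    moreover have "zero_outside Y ` fs.span ?G = zero_outside Y ` polyfuns entry ?V D"
      unfolding span_G using zero_outside_zero_outside[of Y X] YX by (auto simp: image_image)
    ultimately show ?thesis unfolding hilbert_fn_def span_G by simp
  qed
  then show ?thesis using that[of e] by (simp add: e_def)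
qed

section \<open>The dimension bound\<close>

lemma chain_growth_ge_binomial:
  fixes a :: "nat \<Rightarrow> nat \<Rightarrow> nat"
  assumes mono: "\<And>j D D'. j \<le> k \<Longrightarrow> D \<le> D' \<Longrightarrow> a j D \<le> a j D'"
    and pos: "\<And>j D. j \<le> k \<Longrightarrow> 1 \<le> a j D"
    and step: "\<And>j. j < k \<Longrightarrow> \<exists>e\<ge>1. \<forall>D\<ge>e. a j D + a (Suc j) (D - e) \<le> a (Suc j) D"
  obtains E where "\<And>t. (t + k) choose k \<le> a k (E * t)"
proof -
  obtain e where e: "\<And>j. j < k \<Longrightarrow> \<forall>D\<ge>e j. a j D + a (Suc j) (D - e j) \<le> a (Suc j) D"
    using step by metis
  define E where "E = (\<Sum>j<k. e j)"
  have step': "a j D + a (Suc j) (D - E) \<le> a (Suc j) D" if j: "j < k" and D: "E \<le> D" for j D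
  proof -
    have "e j \<le> E" unfolding E_def by (rule member_le_sum) (use j in auto)
    then have "a j D + a (Suc j) (D - e j) \<le> a (Suc j) D" using e[OF j] D by simp
    moreover have "a (Suc j) (D - E) \<le> a (Suc j) (D - e j)"
      using mono[of "Suc j"] j \<open>e j \<le> E\<close> by simp
    ultimately show ?thesis by simp
  qed
  have "(t + j) choose j \<le> a j (E * t)" if "j \<le> k" for j t
    using that
  proof (induction j arbitrary: t)
    case 0 then show ?case using pos[of 0] by simp
  next
    case (Suc j)
    have IH: "(t + j) choose j \<le> a j (E * t)" for t using Suc by simp
    show ?case
    proof (induction t)
      case 0 then show ?case using pos[of "Suc j"] Suc.prems by simp
    next
      case (Suc t)
      have "((Suc t + Suc j) choose (Suc j)) = ((t + Suc j) choose j) + ((t + Suc j) choose (Suc j))"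
        by simp
      also have "(t + Suc j) choose j \<le> a j (E * Suc t)" using IH[of "Suc t"] by simp
      also have "(t + Suc j) choose (Suc j) \<le> a (Suc j) (E * t)" by (rule Suc.IH)
      also have "a j (E * Suc t) + a (Suc j) (E * t) \<le> a (Suc j) (E * Suc t)"
        using step'[of j "E * Suc t"] \<open>Suc j \<le> k\<close> by simp
      finally show ?case by simp
    qed
  qed
  then show ?thesis using that by blast
qed

lemma binomial_le_poly_imp_le:
  fixes c A p k :: nat
  assumes bound: "\<And>t. (t + k) choose k \<le> c * (A * t + 1) ^ p"
  shows "k \<le> p"
proof (rule ccontr)
  assume "\<not> k \<le> p"
  then have kp: "p + 1 \<le> k" by simp
  define B where "B = k ^ k * c * (A + 1) ^ p"
  define t where "t = B + 1"
  have t1: "1 \<le> t" by (simp add: t_def)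
  have "(real (t + k) / real k) ^ k \<le> real ((t + k) choose k)"
    by (rule binomial_ge_n_over_k_pow_k) simp
  then have "real ((t + k) ^ k) \<le> real (k ^ k * ((t + k) choose k))"
    using kp by (simp add: field_simps)
  then have "t ^ k \<le> k ^ k * ((t + k) choose k)"
    using power_mono[of t "t + k" k] by (simp only: of_nat_le_iff) linarith
  also have "\<dots> \<le> k ^ k * (c * (A * t + 1) ^ p)" using bound[of t] by simp
  also have "(A * t + 1) ^ p \<le> ((A + 1) * t) ^ p"
    by (rule power_mono) (use t1 in \<open>simp_all add: algebra_simps\<close>)
  also have "k ^ k * (c * ((A + 1) * t) ^ p) = B * t ^ p"
    unfolding B_def power_mult_distrib by (simp only: ac_simps)
  finally have "t ^ k \<le> B * t ^ p" by (simp add: mult_left_mono)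
  moreover have "t * t ^ p \<le> t ^ k" using power_increasing[OF kp t1] by simp
  ultimately have "t * t ^ p \<le> B * t ^ p" by linarith
  then have "t \<le> B" using t1 by simp
  then show False by (simp add: t_def)
qed

definition param_coord :: "nat \<times> bool \<times> nat list
    \<Rightarrow> (nat \<Rightarrow> nat list \<Rightarrow> 'a) \<times> (nat \<Rightarrow> nat list \<Rightarrow> 'a) \<Rightarrow> 'a" where
  "param_coord j y = (case j of (t, b, i) \<Rightarrow> if b then fst y t i else snd y t i)"

definition param_index :: "nat \<Rightarrow> nat \<Rightarrow> nat \<Rightarrow> (nat \<times> bool \<times> nat list) set" where
  "param_index R n d = {0..<R} \<times> (UNIV :: bool set) \<times> idx_set n d"

lemma finite_param_index: "finite (param_index R n d)"
  unfolding param_index_def using finite_idx_set by auto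

lemma card_param_index: "card (param_index R n d) = 2 * R * n ^ d"
  unfolding param_index_def by (simp add: card_cartesian_product card_idx_set)

lemma entry_pt_sum_in_polyfuns:
  assumes v: "v \<in> positions n d"
  shows "(\<lambda>y. entry v (pt_sum n d R K (fst y) (snd y)) :: 'a::field) \<in> polyfuns param_coord (param_index R n d) 2"
proof -
  obtain i j where ij: "v = (i, j)" "i \<in> idx_set n d" "j \<in> idx_set n d"
    using v by (auto simp: positions_def)
  have "entry v (pt_sum n d R K u w) = (\<Sum>t<R. u t (mix (K t) j i) * w t (mix (K t) i j))"
    for u w :: "nat \<Rightarrow> nat list \<Rightarrow> 'a"
    unfolding entry_def pt_sum_def sum_apply using ij
    by (intro sum.cong refl) (simp add: ptrans_def outer_def mix_in_idx_set)
  moreover have "(\<lambda>y. \<Sum>t<R. fst y t (mix (K t) j i) * snd y t (mix (K t) i j))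
      \<in> polyfuns param_coord (param_index R n d) (1 + 1)"
  proof (rule polyfuns_sum)
    fix t assume t: "t \<in> {..<R}"
    have "param_coord (t, True, mix (K t) j i) \<in> polyfuns param_coord (param_index R n d) 1"
      by (rule polyfuns_coord) (use t ij mix_in_idx_set finite_param_index in \<open>auto simp: param_index_def\<close>)
    moreover have "param_coord (t, False, mix (K t) i j) \<in> polyfuns param_coord (param_index R n d) 1"
      by (rule polyfuns_coord) (use t ij mix_in_idx_set finite_param_index in \<open>auto simp: param_index_def\<close>)
    ultimately have "(\<lambda>y. param_coord (t, True, mix (K t) j i) y * param_coord (t, False, mix (K t) i j) y)
        \<in> polyfuns param_coord (param_index R n d) (1 + 1)"
      by (rule polyfuns_mult)
    then
    show "(\<lambda>y. fst y t (mix (K t) j i) * snd y t (mix (K t) i j))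
        \<in> polyfuns param_coord (param_index R n d) (1 + 1)"
      by (simp add: param_coord_def)
  qed
  ultimately show ?thesis by (simp add: numeral_2_eq_2)
qed

lemma hilbert_fn_low_pt_rank_le:
  fixes S :: "(nat list \<Rightarrow> nat list \<Rightarrow> 'a::field) set"
  assumes S: "S \<subseteq> mats n d" "\<And>M. M \<in> S \<Longrightarrow> pt_rank n d M \<le> R" and Z: "Z \<subseteq> zclosure n d S"
  shows "hilbert_fn n d Z D
    \<le> card (pt_patterns R d) * (2 * card (positions n d) * D + 1) ^ card (param_index R n d)"
proof -
  let ?\<phi> = "\<lambda>K y. pt_sum n d R K (fst y) (snd y) :: nat list \<Rightarrow> nat list \<Rightarrow> 'a"
  have SU: "S \<subseteq> (\<Union>K\<in>pt_patterns R d. range (?\<phi> K))"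
  proof
    fix M assume "M \<in> S"
    then obtain K u v where "K \<in> pt_patterns R d" "M = pt_sum n d R K u v"
      using pt_rank_le_imp_pt_sum[of M n d R] S by blast
    then show "M \<in> (\<Union>K\<in>pt_patterns R d. range (?\<phi> K))"
      by (auto intro!: bexI[of _ K] image_eqI[of _ _ "(u, v)"])
  qed
  have "hilbert_fn n d Z D \<le> hilbert_fn n d (zclosure n d S) D" by (rule hilbert_fn_mono[OF Z])
  also have "\<dots> \<le> hilbert_fn n d S D" by (rule hilbert_fn_zclosure_le[OF S(1)])
  also have "\<dots> \<le> hilbert_fn n d (\<Union>K\<in>pt_patterns R d. range (?\<phi> K)) D"
    by (rule hilbert_fn_mono[OF SU])
  also have "\<dots> \<le> (\<Sum>K\<in>pt_patterns R d. hilbert_fn n d (range (?\<phi> K)) D)"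
    by (rule hilbert_fn_UN_le[OF finite_pt_patterns])
  also have "\<dots> \<le> (\<Sum>K\<in>pt_patterns R d.
      (2 * card (positions n d) * D + 1) ^ card (param_index R n d))"
    by (intro sum_mono hilbert_fn_range_le[where cp = param_coord] finite_param_index
        entry_pt_sum_in_polyfuns)
  finally show ?thesis by simp
qed

lemma zdim_zclosure_low_pt_rank_le:
  fixes S :: "(nat list \<Rightarrow> nat list \<Rightarrow> 'a::field) set"
  assumes S: "S \<subseteq> mats n d" "\<And>M. M \<in> S \<Longrightarrow> pt_rank n d M \<le> R"
  shows "zdim n d (zclosure n d S) \<le> enat (2 * R * n ^ d)"
  unfolding zdim_def
proof (rule Sup_least, clarify)
  fix k and Z :: "nat \<Rightarrow> (nat list \<Rightarrow> nat list \<Rightarrow> 'a) set"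
  assume irr: "\<forall>t\<le>k. zirreducible n d (Z t) \<and> Z t \<subseteq> zclosure n d S"
    and chain: "\<forall>t<k. Z t \<subset> Z (Suc t)"
  obtain E where E: "\<And>t. (t + k) choose k \<le> hilbert_fn n d (Z k) (E * t)"
  proof (rule chain_growth_ge_binomial)
    show "hilbert_fn n d (Z j) D \<le> hilbert_fn n d (Z j) D'" if "D \<le> D'" for j D D'
      using that by (rule hilbert_fn_mono_degree)
    show "1 \<le> hilbert_fn n d (Z j) D" if "j \<le> k" for j D
      using irr that by (intro hilbert_fn_pos) (auto simp: zirreducible_def)
    show "\<exists>e\<ge>1. \<forall>D\<ge>e. hilbert_fn n d (Z j) D + hilbert_fn n d (Z (Suc j)) (D - e)
        \<le> hilbert_fn n d (Z (Suc j)) D" if j: "j < k" for j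
      using irr chain j
      by (metis Suc_leI hilbert_fn_step le_eq_less_or_eq zirreducible_def)
  qed blast
  have "(t + k) choose k \<le> card (pt_patterns R d)
      * ((2 * card (positions n d) * E) * t + 1) ^ card (param_index R n d)" for t
    using E[of t] hilbert_fn_low_pt_rank_le[OF S, of "Z k" "E * t"] irr by (simp add: mult.assoc)
  then have "k \<le> card (param_index R n d)" by (rule binomial_le_poly_imp_le)
  then show "enat k \<le> enat (2 * R * n ^ d)" by (simp add: card_param_index)
qed

lemma double_nat_floor_lt:
  fixes \<epsilon> :: real
  assumes "0 < \<epsilon>" "1 \<le> N"
  shows "2 * nat \<lfloor>(1/2 - \<epsilon>) * real N\<rfloor> < N"
proof (cases "0 \<le> (1/2 - \<epsilon>) * real N")
  case True
  then have "real (nat \<lfloor>(1/2 - \<epsilon>) * real N\<rfloor>) \<le> (1/2 - \<epsilon>) * real N" by (rule of_nat_floor)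
  moreover have "0 < \<epsilon> * real N" using assms by simp
  ultimately have "real (2 * nat \<lfloor>(1/2 - \<epsilon>) * real N\<rfloor>) < real N"
    by (simp add: algebra_simps)
  then show ?thesis by (simp only: of_nat_less_iff)
qed (use assms in \<open>simp add: nat_floor_neg\<close>)

lemma zdim_low_pt_rank_lt:
  fixes \<epsilon> :: real
  assumes "0 < \<epsilon>" "1 \<le> n"
  shows "zdim n d (zclosure n d {M :: nat list \<Rightarrow> nat list \<Rightarrow> 'a::field. M \<in> mats n d \<and>
           real (pt_rank n d M) \<le> (1/2 - \<epsilon>) * real n ^ d}) < enat (n ^ (2 * d))"
proof -
  define R where "R = nat \<lfloor>(1/2 - \<epsilon>) * real (n ^ d)\<rfloor>"
  have "zdim n d (zclosure n d {M :: nat list \<Rightarrow> nat list \<Rightarrow> 'a. M \<in> mats n d \<and>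
      real (pt_rank n d M) \<le> (1/2 - \<epsilon>) * real n ^ d}) \<le> enat (2 * R * n ^ d)"
    by (rule zdim_zclosure_low_pt_rank_le) (auto simp: R_def intro: le_nat_floor)
  also have "2 * R * n ^ d < n ^ d * n ^ d"
    using double_nat_floor_lt[OF assms(1), of "n ^ d"] assms(2) by (simp add: R_def)
  then have "enat (2 * R * n ^ d) < enat (n ^ (2 * d))"
    by (simp add: power_mult[symmetric] power2_eq_square[symmetric] mult.commute)
  finally show ?thesis .
qed

theorem proposition3p17:
  fixes \<epsilon> :: real and d :: "nat \<Rightarrow> nat"
  assumes "\<epsilon> > 0" and "\<forall>n. d n \<ge> 1"
  shows "(finite (UNIV :: 'a::field set) \<longrightarrow>
           ((\<lambda>n. real (card {M :: nat list \<Rightarrow> nat list \<Rightarrow> 'a. M \<in> mats n (d n) \<and>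
                      real (pt_rank n (d n) M) \<le> (1/2 - \<epsilon>) * real n ^ d n})
                 / real (card (mats n (d n) :: (nat list \<Rightarrow> nat list \<Rightarrow> 'a) set)))
              \<longlonglongrightarrow> 0))
       \<and> (infinite (UNIV :: 'a set) \<longrightarrow>
           (\<forall>\<^sub>F n in sequentially.
              zdim n (d n) (zclosure n (d n) {M :: nat list \<Rightarrow> nat list \<Rightarrow> 'a. M \<in> mats n (d n) \<and>
                      real (pt_rank n (d n) M) \<le> (1/2 - \<epsilon>) * real n ^ d n})
              < enat (n ^ (2 * d n))))"
proof (intro conjI impI)
  assume "finite (UNIV :: 'a set)"
  then show "(\<lambda>n. real (card {M :: nat list \<Rightarrow> nat list \<Rightarrow> 'a. M \<in> mats n (d n) \<and>
                      real (pt_rank n (d n) M) \<le> (1/2 - \<epsilon>) * real n ^ d n})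
                 / real (card (mats n (d n) :: (nat list \<Rightarrow> nat list \<Rightarrow> 'a) set))) \<longlonglongrightarrow> 0"
    using assms by (intro low_pt_rank_fraction_tendsto_0) auto
next
  show "\<forall>\<^sub>F n in sequentially.
      zdim n (d n) (zclosure n (d n) {M :: nat list \<Rightarrow> nat list \<Rightarrow> 'a. M \<in> mats n (d n) \<and>
        real (pt_rank n (d n) M) \<le> (1/2 - \<epsilon>) * real n ^ d n}) < enat (n ^ (2 * d n))"
    using eventually_ge_at_top[of 1] by eventually_elim (rule zdim_low_pt_rank_lt[OF assms(1)])
qed

end
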